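(* Let $T$ be a complete first-order theory with monster model $\mathcal{U}$. The relation $\geq_{\mathbb{E}}$ on the collection of global Keisler measures (in finitely many variables) is a preorder; that is, for all global Keisler measures $\mu,\nu,\eta$: $\mu\geq_{\mathbb{E}}\mu$, and if $\mu\geq_{\mathbb{E}}\nu$ and $\nu\geq_{\mathbb{E}}\eta$ then $\mu\geq_{\mathbb{E}}\eta$.
   Context: "Small" means of cardinality less than the saturation of $\mathcal{U}$. For $B\subseteq\mathcal{U}$ and a finite tuple of variables $x$, $\mathcal{L}_x(B)$ is the Boolean algebra of formulas in free variables $x$ with parameters from $B$ modulo $T$-equivalence; $\mathcal{L}_x(B)$ is identified with a subalgebra of $\mathcal{L}_{xy}(B)$ via $\varphi(x)\mapsto\varphi(x)\wedge y=y$. A Keisler measure over $B$ in $x$ is a finitely additive probability measure on $\mathcal{L}_x(B)$; $\mathfrak{M}_x(B)$ denotes the set of these; global means over $\mathcal{U}$. For $\omega\in\mathfrak{M}_{xy}(B)$, $\pi_x(\omega)(\varphi(x))=\omega(\varphi(x)\wedge y=y)$ (similarly $\pi_y$), and $\omega|_C$ is restriction to $\mathcal{L}_{xy}(C)$. For $\mu\in\mathfrak{M}_x(\mathcal{U})$, $\nu\in\mathfrak{M}_y(\mathcal{U})$ ($x,y$ disjoint) and small $A$: $\mu\geq_{\mathbb{E},A}\nu$ means there is $\lambda\in\mathfrak{M}_{xy}(A)$ with $\pi_x(\lambda)=\mu|_A$ such that every $\omega\in\mathfrak{M}_{xy}(\mathcal{U})$ with $\omega|_A=\lambda$ and $\pi_x(\omega)=\mu$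 satisfies $\pi_y(\omega)=\nu$. $\mu\geq_{\mathbb{E}}\nu$ means $\mu\geq_{\mathbb{E},A}\nu$ for some small $A$. As a relation on global measures, $\mu\geq_{\mathbb{E}}\nu$ is evaluated after writing $\mu$ and $\nu$ in distinct (disjoint) tuples of variables (so in particular $\mu\geq_{\mathbb{E}}\mu$ means $\mu(x)\geq_{\mathbb{E}}\mu(y)$ for a copy $y$ of $x$). *)

theory Defs
  imports Complex_Main
begin

datatype ('f, 'u) trm = Var nat | Par 'u | App 'f "('f, 'u) trm list"

datatype ('f, 'r, 'u) fm =
    FEq "('f, 'u) trm" "('f, 'u) trm"
  | FRel 'r "('f, 'u) trm list"
  | FNeg "('f, 'r, 'u) fm"
  | FConj "('f, 'r, 'u) fm" "('f, 'r, 'u) fm"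
  | FEx nat "('f, 'r, 'u) fm"

type_synonym ('f, 'r, 'u) struc = "('f \<Rightarrow> 'u list \<Rightarrow> 'u) \<times> ('r \<Rightarrow> 'u list \<Rightarrow> bool)"

fun eval_t :: "('f, 'r, 'u) struc \<Rightarrow> (nat \<Rightarrow> 'u) \<Rightarrow> ('f, 'u) trm \<Rightarrow> 'u" where
  "eval_t S e (Var i) = e i"
| "eval_t S e (Par a) = a"
| "eval_t S e (App f ts) = fst S f (map (eval_t S e) ts)"

fun sat :: "('f, 'r, 'u) struc \<Rightarrow> (nat \<Rightarrow> 'u) \<Rightarrow> ('f, 'r, 'u) fm \<Rightarrow> bool" where
  "sat S e (FEq s t) = (eval_t S e s = eval_t S e t)"
| "sat S e (FRel R ts) = snd S R (map (eval_t S e) ts)"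
| "sat S e (FNeg \<phi>) = (\<not> sat S e \<phi>)"
| "sat S e (FConj \<phi> \<psi>) = (sat S e \<phi> \<and> sat S e \<psi>)"
| "sat S e (FEx i \<phi>) = (\<exists>a. sat S (e(i := a)) \<phi>)"

fun fv_t :: "('f, 'u) trm \<Rightarrow> nat set" where
  "fv_t (Var i) = {i}"
| "fv_t (Par a) = {}"
| "fv_t (App f ts) = (\<Union>t\<in>set ts. fv_t t)"

fun par_t :: "('f, 'u) trm \<Rightarrow> 'u set" where
  "par_t (Var i) = {}"
| "par_t (Par a) = {a}"
| "par_t (App f ts) = (\<Union>t\<in>set ts. par_t t)"

fun fv :: "('f, 'r, 'u) fm \<Rightarrow> nat set" where
  "fv (FEq s t) = fv_t s \<union> fv_t t"
| "fv (FRel R ts) = (\<Union>t\<in>set ts. fv_t t)"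
| "fv (FNeg \<phi>) = fv \<phi>"
| "fv (FConj \<phi> \<psi>) = fv \<phi> \<union> fv \<psi>"
| "fv (FEx i \<phi>) = fv \<phi> - {i}"

fun params :: "('f, 'r, 'u) fm \<Rightarrow> 'u set" where
  "params (FEq s t) = par_t s \<union> par_t t"
| "params (FRel R ts) = (\<Union>t\<in>set ts. par_t t)"
| "params (FNeg \<phi>) = params \<phi>"
| "params (FConj \<phi> \<psi>) = params \<phi> \<union> params \<psi>"
| "params (FEx i \<phi>) = params \<phi>"

(* \<phi> is a formula in the free variables x = (x_0,...,x_{n-1}) (= Var 0..Var (n-1))
   with parameters from B *)
definition fm_in :: "nat \<Rightarrow> 'u set \<Rightarrow> ('f, 'r, 'u) fm \<Rightarrow> bool" where
  "fm_in n B \<phi> \<longleftrightarrow> fv \<phi> \<subseteq> {..<n} \<and> params \<phi> \<subseteq> B"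

definition saturated :: "('f, 'r, 'u) struc \<Rightarrow> 'k rel \<Rightarrow> bool" where
  "saturated S \<kappa> \<longleftrightarrow>
     (\<forall>(A :: 'u set) n (p :: ('f, 'r, 'u) fm set).
        ordLess2 (card_of A) \<kappa> \<and> (\<forall>\<phi>\<in>p. fm_in n A \<phi>) \<and>
        (\<forall>q\<subseteq>p. finite q \<longrightarrow> (\<exists>v. length v = n \<and> (\<forall>\<phi>\<in>q. sat S (\<lambda>i. v ! i) \<phi>)))
        \<longrightarrow> (\<exists>v. length v = n \<and> (\<forall>\<phi>\<in>p. sat S (\<lambda>i. v ! i) \<phi>)))"

definition automorphism :: "('f, 'r, 'u) struc \<Rightarrow> ('u \<Rightarrow> 'u) \<Rightarrow> bool" where
  "automorphism S \<sigma> \<longleftrightarrow> bij \<sigma> \<and>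
     (\<forall>F as. \<sigma> (fst S F as) = fst S F (map \<sigma> as)) \<and>
     (\<forall>R as. snd S R (map \<sigma> as) = snd S R as)"

definition elementary_on :: "('f, 'r, 'u) struc \<Rightarrow> 'u set \<Rightarrow> ('u \<Rightarrow> 'u) \<Rightarrow> bool" where
  "elementary_on S A f \<longleftrightarrow>
     (\<forall>(\<phi> :: ('f, 'r, 'u) fm) e. params \<phi> = {} \<and> (\<forall>i\<in>fv \<phi>. e i \<in> A) \<longrightarrow>
        (sat S e \<phi> \<longleftrightarrow> sat S (f \<circ> e) \<phi>))"

definition strongly_homogeneous :: "('f, 'r, 'u) struc \<Rightarrow> 'k rel \<Rightarrow> bool" where
  "strongly_homogeneous S \<kappa> \<longleftrightarrow>
     (\<forall>A f. ordLess2 (card_of A) \<kappa> \<and> elementary_on S A f \<longrightarrow>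
        (\<exists>\<sigma>. automorphism S \<sigma> \<and> (\<forall>a\<in>A. \<sigma> a = f a)))"

(* S is a monster model (of its complete theory T = Th(S)) with respect to the
   cardinal kappa, which is bigger than |T| = |L| + aleph_0 *)
definition monster :: "('f, 'r, 'u) struc \<Rightarrow> 'k rel \<Rightarrow> bool" where
  "monster S \<kappa> \<longleftrightarrow> Card_order \<kappa> \<and>
     ordLess2 (card_of (UNIV :: nat set)) \<kappa> \<and>
     ordLess2 (card_of (UNIV :: 'f set)) \<kappa> \<and>
     ordLess2 (card_of (UNIV :: 'r set)) \<kappa> \<and>
     saturated S \<kappa> \<and> strongly_homogeneous S \<kappa>"

definition small :: "'k rel \<Rightarrow> 'u set \<Rightarrow> bool" where
  "small \<kappa> A \<longleftrightarrow> ordLess2 (card_of A) \<kappa>"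

(* L_x(B) for |x| = n, realised (modulo equivalence in the monster model, i.e.
   modulo T-equivalence) as the Boolean algebra of B-definable subsets of U^n;
   n-tuples are lists of length n. *)
definition defset :: "('f, 'r, 'u) struc \<Rightarrow> nat \<Rightarrow> ('f, 'r, 'u) fm \<Rightarrow> 'u list set" where
  "defset S n \<phi> = {v. length v = n \<and> sat S (\<lambda>i. v ! i) \<phi>}"

definition Defs :: "('f, 'r, 'u) struc \<Rightarrow> nat \<Rightarrow> 'u set \<Rightarrow> 'u list set set" where
  "Defs S n B = {defset S n \<phi> | \<phi>. fm_in n B \<phi>}"

(* Keisler measure over B in n variables: finitely additive probability measure on
   L_x(B); normalised to be 0 on sets outside the algebra, so that equality of
   measures is equality of functions. *)
definition keisler :: "('f, 'r, 'u) struc \<Rightarrow> nat \<Rightarrow> 'u set \<Rightarrow> ('u list set \<Rightarrow> real) \<Rightarrow> bool" where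
  "keisler S n B \<mu> \<longleftrightarrow>
     \<mu> {v. length v = n} = 1 \<and>
     (\<forall>X\<in>Defs S n B. 0 \<le> \<mu> X) \<and>
     (\<forall>X\<in>Defs S n B. \<forall>Y\<in>Defs S n B. X \<inter> Y = {} \<longrightarrow> \<mu> (X \<union> Y) = \<mu> X + \<mu> Y) \<and>
     (\<forall>X. X \<notin> Defs S n B \<longrightarrow> \<mu> X = 0)"

definition restr :: "('f, 'r, 'u) struc \<Rightarrow> nat \<Rightarrow> 'u set \<Rightarrow> ('u list set \<Rightarrow> real) \<Rightarrow> ('u list set \<Rightarrow> real)" where
  "restr S n A \<mu> = (\<lambda>X. if X \<in> Defs S n A then \<mu> X else 0)"

(* variables xy = (x_0..x_{n-1}, y_0..y_{m-1}); tuples are v @ w *)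
definition pi_x :: "('f, 'r, 'u) struc \<Rightarrow> nat \<Rightarrow> nat \<Rightarrow> 'u set \<Rightarrow> ('u list set \<Rightarrow> real) \<Rightarrow> ('u list set \<Rightarrow> real)" where
  "pi_x S n m B \<omega> = (\<lambda>X. if X \<in> Defs S n B
      then \<omega> {v @ w | v w. v \<in> X \<and> length w = m} else 0)"

definition pi_y :: "('f, 'r, 'u) struc \<Rightarrow> nat \<Rightarrow> nat \<Rightarrow> 'u set \<Rightarrow> ('u list set \<Rightarrow> real) \<Rightarrow> ('u list set \<Rightarrow> real)" where
  "pi_y S n m B \<omega> = (\<lambda>Y. if Y \<in> Defs S m B
      then \<omega> {v @ w | v w. length v = n \<and> w \<in> Y} else 0)"

definition geEA :: "('f, 'r, 'u) struc \<Rightarrow> 'u set \<Rightarrow> nat \<Rightarrow> nat \<Rightarrow>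
    ('u list set \<Rightarrow> real) \<Rightarrow> ('u list set \<Rightarrow> real) \<Rightarrow> bool" where
  "geEA S A n m \<mu> \<nu> \<longleftrightarrow>
     (\<exists>lam. keisler S (n + m) A lam \<and> pi_x S n m A lam = restr S n A \<mu> \<and>
        (\<forall>\<omega>. keisler S (n + m) UNIV \<omega> \<and> restr S (n + m) A \<omega> = lam \<and>
             pi_x S n m UNIV \<omega> = \<mu> \<longrightarrow> pi_y S n m UNIV \<omega> = \<nu>))"

definition geE :: "('f, 'r, 'u) struc \<Rightarrow> 'k rel \<Rightarrow> nat \<Rightarrow> nat \<Rightarrow>
    ('u list set \<Rightarrow> real) \<Rightarrow> ('u list set \<Rightarrow> real) \<Rightarrow> bool" where
  "geE S \<kappa> n m \<mu> \<nu> \<longleftrightarrow> (\<exists>A. small \<kappa> A \<and> geEA S A n m \<mu> \<nu>)"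

end

(* Reflexivity is witnessed over the empty set by the image of mu on the diagonal x = y: a global
   measure extending it gives the diagonal measure 1, so its two marginals coincide.

   For transitivity, let lambda1 over A witness mu >= nu and lambda2 over B witness nu >= eta.
   Amalgamating mu with lambda1, and then the result with lambda2 along their common marginal nu,
   yields a global measure Omega(x, y, z) whose xz-marginal, restricted to A u B, witnesses
   mu >= eta: a global omega(x, z) extending it can once more be amalgamated with Omega over
   A u B, and in the resulting measure the xy-marginal is forced to have y-marginal nu, and then
   the yz-marginal is forced to have z-marginal eta.

   All amalgamations are instances of one fact about finitely additive probabilities: measures on
   two Boolean algebras of sets that agree on a common subalgebra separating them have a common
   extension. For finitely many sets a coupling that is conditionally independent over a finite
   separating partition does it, and compactness of the space of [0, 1]-valued set functions
   gives the general case. Separation holds here because projections of definable sets are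
   definable. *)

theory Submission
  imports Defs "HOL-Analysis.Measure_Space" "HOL-Analysis.Function_Topology"
begin

section \<open>Amalgamation of finitely additive probabilities\<close>

definition atom :: "'a set \<Rightarrow> 'a set set \<Rightarrow> 'a \<Rightarrow> 'a set" where
  "atom \<Omega> F x = {y \<in> \<Omega>. \<forall>a\<in>F. y \<in> a \<longleftrightarrow> x \<in> a}"

definition atoms :: "'a set \<Rightarrow> 'a set set \<Rightarrow> 'a set set" where
  "atoms \<Omega> F = atom \<Omega> F ` \<Omega>"

lemma finite_atoms: "finite F \<Longrightarrow> finite (atoms \<Omega> F)"
proof -
  assume "finite F"
  have "atom \<Omega> F x \<in> (\<lambda>T. {y \<in> \<Omega>. \<forall>a\<in>F. y \<in> a \<longleftrightarrow> a \<in> T}) ` Pow F" for x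
    unfolding atom_def by (rule image_eqI[of _ _ "{a \<in> F. x \<in> a}"]) auto
  then have "atoms \<Omega> F \<subseteq> (\<lambda>T. {y \<in> \<Omega>. \<forall>a\<in>F. y \<in> a \<longleftrightarrow> a \<in> T}) ` Pow F"
    by (auto simp: atoms_def)
  then show ?thesis
    by (rule finite_subset) (simp add: \<open>finite F\<close>)
qed

lemma atoms_disjoint:
  assumes "\<alpha> \<in> atoms \<Omega> F" "\<beta> \<in> atoms \<Omega> F" "\<alpha> \<noteq> \<beta>"
  shows "\<alpha> \<inter> \<beta> = {}"
proof -
  obtain x x' where x: "\<alpha> = atom \<Omega> F x" and x': "\<beta> = atom \<Omega> F x'"
    using assms by (auto simp: atoms_def)
  show ?thesis
  proof (rule ccontr)
    assume "\<alpha> \<inter> \<beta> \<noteq> {}"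
    then have "\<forall>a\<in>F. x \<in> a \<longleftrightarrow> x' \<in> a"
      by (auto simp: x x' atom_def)
    then have "\<alpha> = \<beta>"
      by (auto simp: x x' atom_def)
    then show False
      using assms by simp
  qed
qed

lemma Union_atoms: "\<Union>(atoms \<Omega> F) = \<Omega>"
  by (auto simp: atoms_def atom_def)

lemma atoms_subset_space: "\<alpha> \<in> atoms \<Omega> F \<Longrightarrow> \<alpha> \<subseteq> \<Omega>"
  by (auto simp: atoms_def atom_def)

lemma atom_subset_or_disjoint: "a \<in> F \<Longrightarrow> \<alpha> \<in> atoms \<Omega> F \<Longrightarrow> \<alpha> \<subseteq> a \<or> \<alpha> \<inter> a = {}"
  by (auto simp: atoms_def atom_def)

lemma (in algebra) atoms_subset_sets:
  assumes "finite F" "F \<subseteq> M"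
  shows "atoms \<Omega> F \<subseteq> M"
proof -
  have "{y \<in> \<Omega>. y \<in> a \<longleftrightarrow> x \<in> a} \<in> M" if "a \<in> F" for a x
  proof -
    have "{y \<in> \<Omega>. y \<in> a \<longleftrightarrow> x \<in> a} = (if x \<in> a then \<Omega> \<inter> a else \<Omega> - a)"
      by auto
    then show ?thesis
      using that assms(2) by auto
  qed
  then show ?thesis
    using assms(1) by (auto simp: atoms_def atom_def intro!: sets_Collect_finite_All)
qed

locale fa_probability = algebra \<Omega> M for \<Omega> :: "'a set" and M +
  fixes \<mu> :: "'a set \<Rightarrow> real"
  assumes total: "\<mu> \<Omega> = 1"
    and nonneg: "X \<in> M \<Longrightarrow> 0 \<le> \<mu> X"
    and additive: "additive M \<mu>"
begin

lemma measure_Un: "X \<in> M \<Longrightarrow> Y \<in> M \<Longrightarrow> X \<inter> Y = {} \<Longrightarrow> \<mu> (X \<union> Y) = \<mu> X + \<mu> Y"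
  using additive by (simp add: additive_def)

lemma measure_empty [simp]: "\<mu> {} = 0"
  using measure_Un[of "{}" "{}"] by simp

lemma measure_Diff: "X \<in> M \<Longrightarrow> Y \<in> M \<Longrightarrow> Y \<subseteq> X \<Longrightarrow> \<mu> (X - Y) = \<mu> X - \<mu> Y"
  using measure_Un[of Y "X - Y"] Diff by (simp add: Un_absorb1)

lemma measure_mono: "X \<in> M \<Longrightarrow> Y \<in> M \<Longrightarrow> X \<subseteq> Y \<Longrightarrow> \<mu> X \<le> \<mu> Y"
  using measure_Diff[of Y X] nonneg[of "Y - X"] by auto

lemma measure_Int_conull:
  assumes "D \<in> M" "\<mu> D = 1" "X \<in> M"
  shows "\<mu> (X \<inter> D) = \<mu> X"
proof -
  have "\<mu> (X - D) \<le> \<mu> (\<Omega> - D)"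
    using assms sets_into_space by (intro measure_mono) auto
  also have "\<dots> = 0"
    using measure_Diff[of \<Omega> D] assms sets_into_space total by auto
  finally have "\<mu> (X - D) = 0"
    using nonneg[of "X - D"] assms by auto
  moreover have "\<mu> X = \<mu> (X \<inter> D) + \<mu> (X - D)"
    using measure_Un[of "X \<inter> D" "X - D"] assms by (simp add: Int Diff Int_Diff_Un Int_Diff_disjoint)
  ultimately show ?thesis
    by simp
qed

lemma measure_UN_disjoint:
  assumes "finite I" "A ` I \<subseteq> M" "disjoint_family_on A I"
  shows "\<mu> (\<Union>i\<in>I. A i) = (\<Sum>i\<in>I. \<mu> (A i))"
  using assms
proof (induction I rule: finite_induct)
  case (insert i I)
  then have "A i \<inter> (\<Union>j\<in>I. A j) = {}"
    by (auto simp: disjoint_family_on_def)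
  moreover have "disjoint_family_on A I"
    using insert.prems(2) by (rule disjoint_family_on_mono[rotated]) auto
  moreover have "(\<Union>j\<in>I. A j) \<in> M"
    using insert by (intro finite_UN) auto
  ultimately show ?case
    using insert by (simp add: measure_Un)
qed simp

lemma measure_sum_atoms:
  assumes "finite F" "F \<subseteq> M" "X \<in> M"
  shows "\<mu> X = (\<Sum>\<alpha>\<in>atoms \<Omega> F. \<mu> (X \<inter> \<alpha>))"
proof -
  have "(\<lambda>\<alpha>. X \<inter> \<alpha>) ` atoms \<Omega> F \<subseteq> M"
    using atoms_subset_sets[OF assms(1,2)] assms(3) by (auto intro: Int)
  moreover have "disjoint_family_on (\<lambda>\<alpha>. X \<inter> \<alpha>) (atoms \<Omega> F)"
    using atoms_disjoint by (fastforce simp: disjoint_family_on_def)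
  ultimately have "\<mu> (\<Union>\<alpha>\<in>atoms \<Omega> F. X \<inter> \<alpha>) = (\<Sum>\<alpha>\<in>atoms \<Omega> F. \<mu> (X \<inter> \<alpha>))"
    using finite_atoms[OF assms(1)] by (rule measure_UN_disjoint[rotated])
  moreover have "(\<Union>\<alpha>\<in>atoms \<Omega> F. X \<inter> \<alpha>) = X"
    using Union_atoms[of \<Omega> F] sets_into_space assms(3) by blast
  ultimately show ?thesis
    by simp
qed

lemma measure_sum_atoms_inside:
  assumes "finite F" "F \<subseteq> M" "X \<in> M" "\<And>\<alpha>. \<alpha> \<in> atoms \<Omega> F \<Longrightarrow> \<alpha> \<subseteq> X \<or> \<alpha> \<inter> X = {}"
  shows "\<mu> X = (\<Sum>\<alpha>\<in>atoms \<Omega> F. if \<alpha> \<subseteq> X then \<mu> \<alpha> else 0)"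
proof -
  have "X \<inter> \<alpha> = (if \<alpha> \<subseteq> X then \<alpha> else {})" if "\<alpha> \<in> atoms \<Omega> F" for \<alpha>
    using assms(4)[OF that] by auto
  then show ?thesis
    unfolding measure_sum_atoms[OF assms(1-3)] by (intro sum.cong) auto
qed

lemma measure_sum_atoms_weighted:
  assumes "finite F" "F \<subseteq> M" "X \<in> M" "\<And>\<gamma>. \<gamma> \<in> atoms \<Omega> F \<Longrightarrow> \<mu> \<gamma> \<noteq> 0 \<Longrightarrow> f \<gamma> = 1"
  shows "(\<Sum>\<gamma>\<in>atoms \<Omega> F. \<mu> (X \<inter> \<gamma>) * f \<gamma>) = \<mu> X"
proof -
  have "\<mu> (X \<inter> \<gamma>) * f \<gamma> = \<mu> (X \<inter> \<gamma>)" if "\<gamma> \<in> atoms \<Omega> F" for \<gamma>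
  proof (cases "\<mu> \<gamma> = 0")
    case True
    have "\<gamma> \<in> M"
      using that atoms_subset_sets[OF assms(1,2)] by blast
    then have "\<mu> (X \<inter> \<gamma>) = 0"
      using measure_mono[of "X \<inter> \<gamma>" \<gamma>] nonneg[of "X \<inter> \<gamma>"] Int[of X \<gamma>] True assms(3)
      by auto
    then show ?thesis
      by simp
  qed (simp add: assms(4) that)
  then show ?thesis
    unfolding measure_sum_atoms[OF assms(1-3)] by (rule sum.cong[OF refl])
qed

lemma subalgebra:
  assumes "algebra \<Omega> N" "N \<subseteq> M"
  shows "fa_probability \<Omega> N \<mu>"
proof -
  have "additive N \<mu>"
    unfolding additive_def using measure_Un assms(2) by blast
  then show ?thesis
    using assms total nonneg by (auto simp: fa_probability_def fa_probability_axioms_def)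
qed

end

lemma fa_probability_UNIV_iff:
  "fa_probability UNIV UNIV \<mu> \<longleftrightarrow>
    \<mu> UNIV = 1 \<and> (\<forall>X. 0 \<le> \<mu> X) \<and> (\<forall>X Y. X \<inter> Y = {} \<longrightarrow> \<mu> (X \<union> Y) = \<mu> X + \<mu> Y)"
  using algebra_Pow[of "UNIV :: 'a set"]
  by (auto simp: fa_probability_def fa_probability_axioms_def additive_def)

lemma fa_probability_UNIV_le_1: "fa_probability UNIV UNIV \<mu> \<Longrightarrow> \<mu> X \<le> 1"
  using fa_probability.measure_mono[of UNIV UNIV \<mu> X UNIV] fa_probability.total by fastforce

lemma fa_probability_point_masses:
  fixes pt :: "'i \<Rightarrow> 'a" and w :: "'i \<Rightarrow> real"
  assumes "finite P" "\<And>p. p \<in> P \<Longrightarrow> 0 \<le> w p" "(\<Sum>p\<in>P. w p) = 1"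
  shows "fa_probability UNIV UNIV (\<lambda>X. \<Sum>p\<in>P. if pt p \<in> X then w p else 0)"
proof -
  have "(\<Sum>p\<in>P. if pt p \<in> X \<union> Y then w p else 0) =
      (\<Sum>p\<in>P. if pt p \<in> X then w p else 0) + (\<Sum>p\<in>P. if pt p \<in> Y then w p else 0)"
    if "X \<inter> Y = {}" for X Y
    unfolding sum.distrib[symmetric] using that by (intro sum.cong) auto
  then show ?thesis
    using assms by (auto simp: fa_probability_UNIV_iff intro: sum_nonneg)
qed

text \<open>A compactness argument in the Tychonoff product of copies of \<open>[0, 1]\<close> indexed by all sets.\<close>

lemma fa_probability_compactness:
  fixes s :: "'i \<Rightarrow> 'a set" and v :: "'i \<Rightarrow> real"
  assumes finite_case: "\<And>J. finite J \<Longrightarrow> J \<subseteq> I \<Longrightarrow>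
      \<exists>\<mu>. fa_probability UNIV UNIV \<mu> \<and> (\<forall>i\<in>J. \<mu> (s i) = v i)"
  shows "\<exists>\<mu>. fa_probability UNIV UNIV \<mu> \<and> (\<forall>i\<in>I. \<mu> (s i) = v i)"
proof -
  define K :: "('a set \<Rightarrow> real) set" where "K = PiE UNIV (\<lambda>_. {0..1})"
  define C where "C c = (case c of
      Inl (X, Y) \<Rightarrow> {\<mu>. \<mu> (X \<union> Y) = \<mu> X + \<mu> Y}
    | Inr None \<Rightarrow> {\<mu>. \<mu> UNIV = 1}
    | Inr (Some i) \<Rightarrow> {\<mu>. \<mu> (s i) = v i})" for c
  define Cs0 :: "('a set \<times> 'a set + 'i option) set"
    where "Cs0 = Inl ` {(X, Y). X \<inter> Y = {}} \<union> {Inr None}"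
  define Cs where "Cs = Cs0 \<union> Inr ` Some ` I"
  have fa_iff: "fa_probability UNIV UNIV \<mu> \<longleftrightarrow> \<mu> \<in> K \<and> (\<forall>c\<in>Cs0. \<mu> \<in> C c)" for \<mu>
    using fa_probability_UNIV_le_1[of \<mu>]
    by (auto simp: fa_probability_UNIV_iff K_def Cs0_def C_def)
  have "compact K"
    using compactin_PiE[of "\<lambda>_. euclidean" UNIV "\<lambda>_. {0..1::real}"]
    by (simp add: K_def euclidean_product_topology)
  have "continuous_on UNIV (\<lambda>\<mu> :: 'a set \<Rightarrow> real. \<mu> X)" for X
    by simp
  then have closed: "closed (C c)" if "c \<in> Cs" for c
    by (auto simp: C_def split: sum.split option.split intro!: closed_Collect_eq continuous_intros)
  have fip: "K \<inter> (\<Inter>c\<in>Cs'. C c) \<noteq> {}" if "finite Cs'" "Cs' \<subseteq> Cs" for Cs'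
  proof -
    let ?J = "(Inr \<circ> Some) -` Cs'"
    have "finite ?J"
      using \<open>finite Cs'\<close> by (rule finite_vimageI) (simp add: inj_def)
    moreover have "?J \<subseteq> I"
      using \<open>Cs' \<subseteq> Cs\<close> by (auto simp: Cs_def Cs0_def)
    ultimately obtain \<mu> where "fa_probability UNIV UNIV \<mu>" and \<mu>: "\<forall>i\<in>?J. \<mu> (s i) = v i"
      using finite_case by blast
    then have "\<mu> \<in> K" "\<forall>c\<in>Cs0. \<mu> \<in> C c"
      using fa_iff by blast+
    moreover have "\<mu> \<in> C (Inr (Some i))" if "Inr (Some i) \<in> Cs'" for i
      using \<mu> that by (simp add: C_def)
    ultimately have "\<mu> \<in> K \<inter> (\<Inter>c\<in>Cs'. C c)"
      using \<open>Cs' \<subseteq> Cs\<close> unfolding Cs_def by blast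
    then show ?thesis
      by blast
  qed
  obtain \<mu> where "\<mu> \<in> K \<inter> (\<Inter>c\<in>Cs. C c)"
    using compact_imp_fip_image[OF \<open>compact K\<close> closed fip] by (metis equals0I)
  then have "\<mu> \<in> K" and \<mu>: "\<forall>c\<in>Cs. \<mu> \<in> C c"
    by auto
  then have "fa_probability UNIV UNIV \<mu>"
    using fa_iff unfolding Cs_def by blast
  moreover have "\<mu> (s i) = v i" if "i \<in> I" for i
    using bspec[OF \<mu>, of "Inr (Some i)"] that by (simp add: Cs_def C_def)
  ultimately show ?thesis
    by blast
qed

lemma sum_if_in_cells:
  assumes "\<And>\<alpha> b. \<alpha> \<in> I \<Longrightarrow> b \<in> J \<Longrightarrow> w \<alpha> b \<noteq> 0 \<Longrightarrow> x \<alpha> b \<in> \<alpha>"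
    and "\<And>\<alpha>. \<alpha> \<in> I \<Longrightarrow> \<alpha> \<subseteq> X \<or> \<alpha> \<inter> X = {}"
  shows "(\<Sum>\<alpha>\<in>I. \<Sum>b\<in>J. if x \<alpha> b \<in> X then w \<alpha> b else 0) = (\<Sum>\<alpha>\<in>I. if \<alpha> \<subseteq> X then \<Sum>b\<in>J. w \<alpha> b else 0)"
proof (intro sum.cong refl)
  fix \<alpha>
  assume "\<alpha> \<in> I"
  then have "(if x \<alpha> b \<in> X then w \<alpha> b else 0) = (if \<alpha> \<subseteq> X then w \<alpha> b else 0)" if "b \<in> J" for b
    using assms(1)[OF \<open>\<alpha> \<in> I\<close> that] assms(2)[OF \<open>\<alpha> \<in> I\<close>] by auto
  then show "(\<Sum>b\<in>J. if x \<alpha> b \<in> X then w \<alpha> b else 0) = (if \<alpha> \<subseteq> X then \<Sum>b\<in>J. w \<alpha> b else 0)"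
    by (simp cong: sum.cong)
qed

lemma fa_probability_on_cells:
  assumes fin: "finite I" "finite J"
    and w_nonneg: "\<And>\<alpha> \<beta>. \<alpha> \<in> I \<Longrightarrow> \<beta> \<in> J \<Longrightarrow> 0 \<le> w \<alpha> \<beta>"
    and w_eq_0: "\<And>\<alpha> \<beta>. \<alpha> \<in> I \<Longrightarrow> \<beta> \<in> J \<Longrightarrow> \<alpha> \<inter> \<beta> = {} \<Longrightarrow> w \<alpha> \<beta> = 0"
    and total: "(\<Sum>\<alpha>\<in>I. \<Sum>\<beta>\<in>J. w \<alpha> \<beta>) = 1"
  obtains \<mu> where "fa_probability UNIV UNIV \<mu>"
    "\<And>X. (\<And>\<alpha>. \<alpha> \<in> I \<Longrightarrow> \<alpha> \<subseteq> X \<or> \<alpha> \<inter> X = {}) \<Longrightarrow>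
      \<mu> X = (\<Sum>\<alpha>\<in>I. if \<alpha> \<subseteq> X then \<Sum>\<beta>\<in>J. w \<alpha> \<beta> else 0)"
    "\<And>X. (\<And>\<beta>. \<beta> \<in> J \<Longrightarrow> \<beta> \<subseteq> X \<or> \<beta> \<inter> X = {}) \<Longrightarrow>
      \<mu> X = (\<Sum>\<beta>\<in>J. if \<beta> \<subseteq> X then \<Sum>\<alpha>\<in>I. w \<alpha> \<beta> else 0)"
proof -
  define pt where "pt \<alpha> \<beta> = (SOME x. x \<in> \<alpha> \<inter> \<beta>)" for \<alpha> \<beta> :: "'a set"
  have pt: "pt \<alpha> \<beta> \<in> \<alpha> \<inter> \<beta>" if "\<alpha> \<in> I" "\<beta> \<in> J" "w \<alpha> \<beta> \<noteq> 0" for \<alpha> \<beta>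
    using w_eq_0[OF that(1,2)] that(3) unfolding pt_def by (metis some_in_eq)
  define \<mu> where "\<mu> = (\<lambda>X. \<Sum>\<alpha>\<in>I. \<Sum>\<beta>\<in>J. if pt \<alpha> \<beta> \<in> X then w \<alpha> \<beta> else 0)"
  have "(\<Sum>p\<in>I \<times> J. w (fst p) (snd p)) = 1"
    using total by (simp only: sum.cartesian_product case_prod_unfold)
  then have "fa_probability UNIV UNIV
      (\<lambda>X. \<Sum>p\<in>I \<times> J. if pt (fst p) (snd p) \<in> X then w (fst p) (snd p) else 0)"
    using fin w_nonneg by (intro fa_probability_point_masses) auto
  then have "fa_probability UNIV UNIV \<mu>"
    by (simp only: \<mu>_def sum.cartesian_product case_prod_unfold)
  moreover have "\<mu> X = (\<Sum>\<alpha>\<in>I. if \<alpha> \<subseteq> X then \<Sum>\<beta>\<in>J. w \<alpha> \<beta> else 0)"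
    if "\<And>\<alpha>. \<alpha> \<in> I \<Longrightarrow> \<alpha> \<subseteq> X \<or> \<alpha> \<inter> X = {}" for X
    unfolding \<mu>_def using pt that by (intro sum_if_in_cells) auto
  moreover have "\<mu> X = (\<Sum>\<beta>\<in>J. if \<beta> \<subseteq> X then \<Sum>\<alpha>\<in>I. w \<alpha> \<beta> else 0)"
    if "\<And>\<beta>. \<beta> \<in> J \<Longrightarrow> \<beta> \<subseteq> X \<or> \<beta> \<inter> X = {}" for X
    unfolding \<mu>_def using pt that by (subst sum.swap) (intro sum_if_in_cells, auto)
  ultimately show ?thesis
    using that by blast
qed

locale amalgamable =
  M1: fa_probability \<Omega> A1 \<mu>1 + M2: fa_probability \<Omega> A2 \<mu>2 + M0: algebra \<Omega> A0
  for \<Omega> :: "'a set" and A0 A1 A2 \<mu>1 \<mu>2 +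
  assumes A0_subset: "A0 \<subseteq> A1" "A0 \<subseteq> A2"
    and agree: "c \<in> A0 \<Longrightarrow> \<mu>1 c = \<mu>2 c"
    and separated: "a \<in> A1 \<Longrightarrow> b \<in> A2 \<Longrightarrow> a \<inter> b = {} \<Longrightarrow> \<exists>c\<in>A0. a \<subseteq> c \<and> c \<inter> b = {}"
begin

text \<open>The coupling of \<open>\<mu>1\<close> and \<open>\<mu>2\<close> that is conditionally independent over the atoms of \<open>G\<close>;
  a null atom contributes nothing, as \<open>x / 0 = 0\<close>.\<close>

definition coupling :: "'a set set \<Rightarrow> 'a set \<Rightarrow> 'a set \<Rightarrow> real" where
  "coupling G \<alpha> \<beta> = (\<Sum>\<gamma>\<in>atoms \<Omega> G. \<mu>1 (\<alpha> \<inter> \<gamma>) * \<mu>2 (\<beta> \<inter> \<gamma>) / \<mu>1 \<gamma>)"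

lemma atoms_subset_A0:
  assumes "finite G" "G \<subseteq> A0"
  shows "atoms \<Omega> G \<subseteq> A0" "atoms \<Omega> G \<subseteq> A1" "atoms \<Omega> G \<subseteq> A2"
  using M0.atoms_subset_sets[OF assms] A0_subset by auto

lemma coupling_nonneg:
  assumes "finite G" "G \<subseteq> A0" "\<alpha> \<in> A1" "\<beta> \<in> A2"
  shows "0 \<le> coupling G \<alpha> \<beta>"
  unfolding coupling_def using atoms_subset_A0[OF assms(1,2)] assms(3,4)
  by (intro sum_nonneg divide_nonneg_nonneg mult_nonneg_nonneg M1.nonneg M2.nonneg) auto

lemma coupling_row:
  assumes "finite G" "G \<subseteq> A0" "\<alpha> \<in> A1" "finite F" "F \<subseteq> A2"
  shows "(\<Sum>\<beta>\<in>atoms \<Omega> F. coupling G \<alpha> \<beta>) = \<mu>1 \<alpha>"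
proof -
  have "(\<Sum>\<beta>\<in>atoms \<Omega> F. coupling G \<alpha> \<beta>) =
      (\<Sum>\<gamma>\<in>atoms \<Omega> G. \<mu>1 (\<alpha> \<inter> \<gamma>) * ((\<Sum>\<beta>\<in>atoms \<Omega> F. \<mu>2 (\<gamma> \<inter> \<beta>)) / \<mu>1 \<gamma>))"
    unfolding coupling_def
    by (subst sum.swap) (simp add: sum_distrib_left sum_divide_distrib Int_commute)
  also have "\<dots> = (\<Sum>\<gamma>\<in>atoms \<Omega> G. \<mu>1 (\<alpha> \<inter> \<gamma>) * (\<mu>2 \<gamma> / \<mu>1 \<gamma>))"
  proof (intro sum.cong refl)
    fix \<gamma>
    assume "\<gamma> \<in> atoms \<Omega> G"
    then have "\<gamma> \<in> A2"
      using atoms_subset_A0[OF assms(1,2)] by blast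
    then show "\<mu>1 (\<alpha> \<inter> \<gamma>) * ((\<Sum>\<beta>\<in>atoms \<Omega> F. \<mu>2 (\<gamma> \<inter> \<beta>)) / \<mu>1 \<gamma>) =
        \<mu>1 (\<alpha> \<inter> \<gamma>) * (\<mu>2 \<gamma> / \<mu>1 \<gamma>)"
      using M2.measure_sum_atoms[OF assms(4,5)] by simp
  qed
  also have "\<dots> = \<mu>1 \<alpha>"
    using atoms_subset_A0[OF assms(1,2)] agree
    by (intro M1.measure_sum_atoms_weighted assms(1,3)) (use assms(2) A0_subset in auto)
  finally show ?thesis .
qed

lemma coupling_column:
  assumes "finite G" "G \<subseteq> A0" "\<beta> \<in> A2" "finite F" "F \<subseteq> A1"
  shows "(\<Sum>\<alpha>\<in>atoms \<Omega> F. coupling G \<alpha> \<beta>) = \<mu>2 \<beta>"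
proof -
  have "(\<Sum>\<alpha>\<in>atoms \<Omega> F. coupling G \<alpha> \<beta>) =
      (\<Sum>\<gamma>\<in>atoms \<Omega> G. \<mu>2 (\<beta> \<inter> \<gamma>) * ((\<Sum>\<alpha>\<in>atoms \<Omega> F. \<mu>1 (\<gamma> \<inter> \<alpha>)) / \<mu>1 \<gamma>))"
    unfolding coupling_def
    by (subst sum.swap) (simp add: sum_distrib_left sum_divide_distrib Int_commute mult.commute)
  also have "\<dots> = (\<Sum>\<gamma>\<in>atoms \<Omega> G. \<mu>2 (\<beta> \<inter> \<gamma>) * (\<mu>1 \<gamma> / \<mu>1 \<gamma>))"
  proof (intro sum.cong refl)
    fix \<gamma>
    assume "\<gamma> \<in> atoms \<Omega> G"
    then have "\<gamma> \<in> A1"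
      using atoms_subset_A0[OF assms(1,2)] by blast
    then show "\<mu>2 (\<beta> \<inter> \<gamma>) * ((\<Sum>\<alpha>\<in>atoms \<Omega> F. \<mu>1 (\<gamma> \<inter> \<alpha>)) / \<mu>1 \<gamma>) =
        \<mu>2 (\<beta> \<inter> \<gamma>) * (\<mu>1 \<gamma> / \<mu>1 \<gamma>)"
      using M1.measure_sum_atoms[OF assms(4,5)] by simp
  qed
  also have "\<dots> = \<mu>2 \<beta>"
    using atoms_subset_A0[OF assms(1,2)] agree
    by (intro M2.measure_sum_atoms_weighted assms(1,3)) (use assms(2) A0_subset in auto)
  finally show ?thesis .
qed

lemma coupling_eq_0:
  assumes "c \<in> G" "\<alpha> \<subseteq> c" "c \<inter> \<beta> = {}"
  shows "coupling G \<alpha> \<beta> = 0"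
proof -
  have "\<alpha> \<inter> \<gamma> = {} \<or> \<beta> \<inter> \<gamma> = {}" if "\<gamma> \<in> atoms \<Omega> G" for \<gamma>
    using atom_subset_or_disjoint[OF assms(1) that] assms(2,3) by blast
  then show ?thesis
    unfolding coupling_def
    by (intro sum.neutral ballI) (metis M1.measure_empty M2.measure_empty mult_zero_left
        mult_zero_right div_0)
qed

lemma finite_separators:
  assumes "finite F1" "F1 \<subseteq> A1" "finite F2" "F2 \<subseteq> A2"
  obtains G where "finite G" "G \<subseteq> A0"
    "\<And>\<alpha> \<beta>. \<alpha> \<in> atoms \<Omega> F1 \<Longrightarrow> \<beta> \<in> atoms \<Omega> F2 \<Longrightarrow> \<alpha> \<inter> \<beta> = {} \<Longrightarrow>
      \<exists>c\<in>G. \<alpha> \<subseteq> c \<and> c \<inter> \<beta> = {}"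
proof -
  let ?P = "{(\<alpha>, \<beta>) \<in> atoms \<Omega> F1 \<times> atoms \<Omega> F2. \<alpha> \<inter> \<beta> = {}}"
  define sep where "sep p = (SOME c. c \<in> A0 \<and> fst p \<subseteq> c \<and> c \<inter> snd p = {})" for p
  have ex: "\<exists>c. c \<in> A0 \<and> fst p \<subseteq> c \<and> c \<inter> snd p = {}" if "p \<in> ?P" for p
  proof -
    have "fst p \<in> A1" "snd p \<in> A2" "fst p \<inter> snd p = {}"
      using that M1.atoms_subset_sets[OF assms(1,2)] M2.atoms_subset_sets[OF assms(3,4)] by auto
    from separated[OF this] show ?thesis
      by (simp only: Bex_def)
  qed
  have sep: "sep p \<in> A0 \<and> fst p \<subseteq> sep p \<and> sep p \<inter> snd p = {}" if "p \<in> ?P" for p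
    unfolding sep_def by (rule someI_ex[OF ex[OF that]])
  have "finite ?P"
    by (rule finite_subset[of _ "atoms \<Omega> F1 \<times> atoms \<Omega> F2"]) (auto simp: finite_atoms assms)
  show ?thesis
  proof (rule that[of "sep ` ?P"])
    show "finite (sep ` ?P)" "sep ` ?P \<subseteq> A0"
      using \<open>finite ?P\<close> sep by auto
    fix \<alpha> \<beta>
    assume "\<alpha> \<in> atoms \<Omega> F1" "\<beta> \<in> atoms \<Omega> F2" "\<alpha> \<inter> \<beta> = {}"
    then have "(\<alpha>, \<beta>) \<in> ?P"
      by simp
    then show "\<exists>c\<in>sep ` ?P. \<alpha> \<subseteq> c \<and> c \<inter> \<beta> = {}"
      using sep by force
  qed
qed

lemma finite_coupling:
  assumes F1: "finite F1" "F1 \<subseteq> A1" and F2: "finite F2" "F2 \<subseteq> A2"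
  obtains w where "\<And>\<alpha> \<beta>. \<alpha> \<in> atoms \<Omega> F1 \<Longrightarrow> \<beta> \<in> atoms \<Omega> F2 \<Longrightarrow> 0 \<le> w \<alpha> \<beta>"
    "\<And>\<alpha> \<beta>. \<alpha> \<in> atoms \<Omega> F1 \<Longrightarrow> \<beta> \<in> atoms \<Omega> F2 \<Longrightarrow> \<alpha> \<inter> \<beta> = {} \<Longrightarrow> w \<alpha> \<beta> = 0"
    "\<And>\<alpha>. \<alpha> \<in> atoms \<Omega> F1 \<Longrightarrow> (\<Sum>\<beta>\<in>atoms \<Omega> F2. w \<alpha> \<beta>) = \<mu>1 \<alpha>"
    "\<And>\<beta>. \<beta> \<in> atoms \<Omega> F2 \<Longrightarrow> (\<Sum>\<alpha>\<in>atoms \<Omega> F1. w \<alpha> \<beta>) = \<mu>2 \<beta>"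
proof -
  obtain G where G: "finite G" "G \<subseteq> A0"
    and separates: "\<And>\<alpha> \<beta>. \<alpha> \<in> atoms \<Omega> F1 \<Longrightarrow> \<beta> \<in> atoms \<Omega> F2 \<Longrightarrow> \<alpha> \<inter> \<beta> = {} \<Longrightarrow>
      \<exists>c\<in>G. \<alpha> \<subseteq> c \<and> c \<inter> \<beta> = {}"
    using finite_separators[OF F1 F2] by blast
  have At: "atoms \<Omega> F1 \<subseteq> A1" "atoms \<Omega> F2 \<subseteq> A2"
    using M1.atoms_subset_sets[OF F1] M2.atoms_subset_sets[OF F2] .
  show ?thesis
  proof (rule that[of "coupling G"])
    show "0 \<le> coupling G \<alpha> \<beta>" if "\<alpha> \<in> atoms \<Omega> F1" "\<beta> \<in> atoms \<Omega> F2" for \<alpha> \<beta>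
      using that At by (intro coupling_nonneg G) auto
    show "coupling G \<alpha> \<beta> = 0" if "\<alpha> \<in> atoms \<Omega> F1" "\<beta> \<in> atoms \<Omega> F2" "\<alpha> \<inter> \<beta> = {}" for \<alpha> \<beta>
      using separates[OF that] coupling_eq_0 by blast
    show "(\<Sum>\<beta>\<in>atoms \<Omega> F2. coupling G \<alpha> \<beta>) = \<mu>1 \<alpha>" if "\<alpha> \<in> atoms \<Omega> F1" for \<alpha>
      using that At by (intro coupling_row G F2) auto
    show "(\<Sum>\<alpha>\<in>atoms \<Omega> F1. coupling G \<alpha> \<beta>) = \<mu>2 \<beta>" if "\<beta> \<in> atoms \<Omega> F2" for \<beta>
      using that At by (intro coupling_column G F1) auto
  qed
qed

lemma finite_amalgamation:
  assumes F1: "finite F1" "F1 \<subseteq> A1" and F2: "finite F2" "F2 \<subseteq> A2"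
  shows "\<exists>\<mu>. fa_probability UNIV UNIV \<mu> \<and> (\<forall>a\<in>F1. \<mu> a = \<mu>1 a) \<and> (\<forall>b\<in>F2. \<mu> b = \<mu>2 b)"
proof -
  define At1 At2 where "At1 = atoms \<Omega> F1" and "At2 = atoms \<Omega> F2"
  obtain w where w_nonneg: "\<And>\<alpha> \<beta>. \<alpha> \<in> At1 \<Longrightarrow> \<beta> \<in> At2 \<Longrightarrow> 0 \<le> w \<alpha> \<beta>"
    and w_eq_0: "\<And>\<alpha> \<beta>. \<alpha> \<in> At1 \<Longrightarrow> \<beta> \<in> At2 \<Longrightarrow> \<alpha> \<inter> \<beta> = {} \<Longrightarrow> w \<alpha> \<beta> = 0"
    and row: "\<And>\<alpha>. \<alpha> \<in> At1 \<Longrightarrow> (\<Sum>\<beta>\<in>At2. w \<alpha> \<beta>) = \<mu>1 \<alpha>"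
    and column: "\<And>\<beta>. \<beta> \<in> At2 \<Longrightarrow> (\<Sum>\<alpha>\<in>At1. w \<alpha> \<beta>) = \<mu>2 \<beta>"
    using finite_coupling[OF F1 F2] unfolding At1_def At2_def by blast
  have "(\<Sum>\<alpha>\<in>At1. \<Sum>\<beta>\<in>At2. w \<alpha> \<beta>) = (\<Sum>\<alpha>\<in>At1. \<mu>1 (\<Omega> \<inter> \<alpha>))"
    using row atoms_subset_space[of _ \<Omega> F1] by (intro sum.cong refl) (simp add: At1_def Int_absorb1)
  also have "\<dots> = 1"
    using M1.measure_sum_atoms[OF F1 M1.top] M1.total by (simp add: At1_def)
  finally obtain \<mu> where "fa_probability UNIV UNIV \<mu>"
    and on_At1: "\<And>X. (\<And>\<alpha>. \<alpha> \<in> At1 \<Longrightarrow> \<alpha> \<subseteq> X \<or> \<alpha> \<inter> X = {}) \<Longrightarrow>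
      \<mu> X = (\<Sum>\<alpha>\<in>At1. if \<alpha> \<subseteq> X then \<Sum>\<beta>\<in>At2. w \<alpha> \<beta> else 0)"
    and on_At2: "\<And>X. (\<And>\<beta>. \<beta> \<in> At2 \<Longrightarrow> \<beta> \<subseteq> X \<or> \<beta> \<inter> X = {}) \<Longrightarrow>
      \<mu> X = (\<Sum>\<beta>\<in>At2. if \<beta> \<subseteq> X then \<Sum>\<alpha>\<in>At1. w \<alpha> \<beta> else 0)"
    using fa_probability_on_cells[of At1 At2 w] w_nonneg w_eq_0 F1 F2
    by (auto simp: At1_def At2_def finite_atoms)
  moreover have "\<mu> a = \<mu>1 a" if "a \<in> F1" for a
  proof -
    have inside: "\<alpha> \<subseteq> a \<or> \<alpha> \<inter> a = {}" if "\<alpha> \<in> At1" for \<alpha>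
      using atom_subset_or_disjoint[OF \<open>a \<in> F1\<close>] that by (simp add: At1_def)
    then have "\<mu> a = (\<Sum>\<alpha>\<in>At1. if \<alpha> \<subseteq> a then \<mu>1 \<alpha> else 0)"
      using on_At1 row by (auto intro: sum.cong)
    then show ?thesis
      using M1.measure_sum_atoms_inside[OF F1, of a] inside that F1 by (auto simp: At1_def)
  qed
  moreover have "\<mu> b = \<mu>2 b" if "b \<in> F2" for b
  proof -
    have inside: "\<beta> \<subseteq> b \<or> \<beta> \<inter> b = {}" if "\<beta> \<in> At2" for \<beta>
      using atom_subset_or_disjoint[OF \<open>b \<in> F2\<close>] that by (simp add: At2_def)
    then have "\<mu> b = (\<Sum>\<beta>\<in>At2. if \<beta> \<subseteq> b then \<mu>2 \<beta> else 0)"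
      using on_At2 column by (auto intro: sum.cong)
    then show ?thesis
      using M2.measure_sum_atoms_inside[OF F2, of b] inside that F2 by (auto simp: At2_def)
  qed
  ultimately show ?thesis
    by blast
qed

theorem amalgamation:
  "\<exists>\<mu>. fa_probability \<Omega> (Pow \<Omega>) \<mu> \<and> (\<forall>a\<in>A1. \<mu> a = \<mu>1 a) \<and> (\<forall>b\<in>A2. \<mu> b = \<mu>2 b)"
proof -
  have "\<exists>\<mu>. fa_probability UNIV UNIV \<mu> \<and> (\<forall>i\<in>A1 <+> A2. \<mu> (case_sum id id i) = case_sum \<mu>1 \<mu>2 i)"
  proof (rule fa_probability_compactness)
    fix J
    assume "finite J" "J \<subseteq> A1 <+> A2"
    have "finite (Inl -` J)" "finite (Inr -` J)"
      using \<open>finite J\<close> by (simp_all add: finite_vimageI)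
    moreover have "Inl -` J \<subseteq> A1" "Inr -` J \<subseteq> A2"
      using \<open>J \<subseteq> A1 <+> A2\<close> by blast+
    ultimately obtain \<mu> where "fa_probability UNIV UNIV \<mu>"
        and on_A1: "\<forall>a\<in>Inl -` J. \<mu> a = \<mu>1 a" and on_A2: "\<forall>b\<in>Inr -` J. \<mu> b = \<mu>2 b"
      using finite_amalgamation[of "Inl -` J" "Inr -` J"] by blast
    moreover have "\<mu> (case_sum id id i) = case_sum \<mu>1 \<mu>2 i" if "i \<in> J" for i
      using that on_A1 on_A2 by (cases i) auto
    ultimately show "\<exists>\<mu>. fa_probability UNIV UNIV \<mu> \<and> (\<forall>i\<in>J. \<mu> (case_sum id id i) = case_sum \<mu>1 \<mu>2 i)"
      by blast
  qed
  then obtain \<mu> where fa: "fa_probability UNIV UNIV \<mu>"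
    and \<mu>: "\<forall>i\<in>A1 <+> A2. \<mu> (case_sum id id i) = case_sum \<mu>1 \<mu>2 i"
    by blast
  interpret fa_probability UNIV UNIV \<mu>
    by (fact fa)
  have "\<mu> \<Omega> = 1"
    using \<mu> M1.total by force
  then have "fa_probability \<Omega> (Pow \<Omega>) \<mu>"
    using algebra_Pow nonneg measure_Un
    by (auto simp: fa_probability_def fa_probability_axioms_def additive_def)
  then show ?thesis
    using \<mu> by force
qed

end

section \<open>Definable sets\<close>

lemma eval_t_cong: "(\<And>i. i \<in> fv_t t \<Longrightarrow> e i = e' i) \<Longrightarrow> eval_t S e t = eval_t S e' t"
proof (induction t)
  case (App f ts)
  then have "map (eval_t S e) ts = map (eval_t S e') ts"
    by (auto intro!: map_cong)
  then show ?case by (simp only: eval_t.simps)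
qed auto

lemma sat_cong: "(\<And>i. i \<in> fv \<phi> \<Longrightarrow> e i = e' i) \<Longrightarrow> sat S e \<phi> = sat S e' \<phi>"
proof (induction \<phi> arbitrary: e e')
  case (FEq s t)
  then show ?case
    using eval_t_cong[of s e e' S] eval_t_cong[of t e e' S] by simp
next
  case (FRel R ts)
  then have "map (eval_t S e) ts = map (eval_t S e') ts"
    by (auto intro!: eval_t_cong)
  then show ?case by (simp only: sat.simps)
next
  case (FNeg \<phi>)
  have "sat S e \<phi> = sat S e' \<phi>"
    by (rule FNeg.IH) (use FNeg.prems in simp)
  then show ?case by simp
next
  case (FConj \<phi> \<psi>)
  have "sat S e \<phi> = sat S e' \<phi>" "sat S e \<psi> = sat S e' \<psi>"
    by (rule FConj.IH; use FConj.prems in simp)+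
  then show ?case by simp
next
  case (FEx i \<phi>)
  have "sat S (e(i := a)) \<phi> = sat S (e'(i := a)) \<phi>" for a
    by (rule FEx.IH) (use FEx.prems in simp)
  then show ?case by simp
qed

fun rename_t :: "(nat \<Rightarrow> nat) \<Rightarrow> ('f, 'u) trm \<Rightarrow> ('f, 'u) trm" where
  "rename_t R (Var i) = Var (R i)"
| "rename_t R (Par a) = Par a"
| "rename_t R (App f ts) = App f (map (rename_t R) ts)"

fun rename :: "(nat \<Rightarrow> nat) \<Rightarrow> ('f, 'r, 'u) fm \<Rightarrow> ('f, 'r, 'u) fm" where
  "rename R (FEq s t) = FEq (rename_t R s) (rename_t R t)"
| "rename R (FRel P ts) = FRel P (map (rename_t R) ts)"
| "rename R (FNeg \<phi>) = FNeg (rename R \<phi>)"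
| "rename R (FConj \<phi> \<psi>) = FConj (rename R \<phi>) (rename R \<psi>)"
| "rename R (FEx i \<phi>) = FEx (R i) (rename R \<phi>)"

lemma eval_rename_t: "eval_t S e (rename_t R t) = eval_t S (e \<circ> R) t"
proof (induction t)
  case (App f ts)
  then have "map (eval_t S e \<circ> rename_t R) ts = map (eval_t S (e \<circ> R)) ts"
    by (auto simp: comp_def)
  then show ?case by (simp only: eval_t.simps rename_t.simps map_map)
qed auto

lemma fv_rename_t: "fv_t (rename_t R t) = R ` fv_t t"
  by (induction t) auto

lemma par_rename_t: "par_t (rename_t R t) = par_t t"
  by (induction t) auto

lemma sat_rename: "inj R \<Longrightarrow> sat S e (rename R \<phi>) = sat S (e \<circ> R) \<phi>"
proof (induction \<phi> arbitrary: e)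
  case (FEx i \<phi>)
  have "sat S (e(R i := a)) (rename R \<phi>) = sat S ((e \<circ> R)(i := a)) \<phi>" for a
  proof -
    have "e(R i := a) \<circ> R = (e \<circ> R)(i := a)"
      using FEx.prems by (auto simp: fun_eq_iff inj_eq)
    then show ?thesis
      using FEx by metis
  qed
  then show ?case by (simp add: comp_def)
qed (auto simp: eval_rename_t comp_def)

lemma fv_rename: "inj R \<Longrightarrow> fv (rename R \<phi>) = R ` fv \<phi>"
  by (induction \<phi>) (auto simp: fv_rename_t inj_eq)

lemma params_rename: "params (rename R \<phi>) = params \<phi>"
  by (induction \<phi>) (auto simp: par_rename_t)

fun FExs :: "nat list \<Rightarrow> ('f, 'r, 'u) fm \<Rightarrow> ('f, 'r, 'u) fm" where
  "FExs [] \<phi> = \<phi>"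
| "FExs (i # is) \<phi> = FEx i (FExs is \<phi>)"

lemma sat_FExs:
  "sat S e (FExs is \<phi>) \<longleftrightarrow> (\<exists>g. sat S (\<lambda>j. if j \<in> set is then g j else e j) \<phi>)"
proof (induction "is" arbitrary: e)
  case (Cons i "is")
  have "(\<exists>a g. sat S (\<lambda>j. if j \<in> set is then g j else (e(i := a)) j) \<phi>) \<longleftrightarrow>
        (\<exists>g. sat S (\<lambda>j. if j \<in> set (i # is) then g j else e j) \<phi>)"
  proof
    assume "\<exists>a g. sat S (\<lambda>j. if j \<in> set is then g j else (e(i := a)) j) \<phi>"
    then obtain a g where "sat S (\<lambda>j. if j \<in> set is then g j else (e(i := a)) j) \<phi>"
      by blast
    then have "sat S (\<lambda>j. if j \<in> set (i # is)
        then (g(i := if i \<in> set is then g i else a)) j else e j) \<phi>"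
      by (rule back_subst[where P = "\<lambda>e. sat S e \<phi>"]) auto
    then show "\<exists>g. sat S (\<lambda>j. if j \<in> set (i # is) then g j else e j) \<phi>"
      by blast
  next
    assume "\<exists>g. sat S (\<lambda>j. if j \<in> set (i # is) then g j else e j) \<phi>"
    then obtain g where "sat S (\<lambda>j. if j \<in> set (i # is) then g j else e j) \<phi>"
      by blast
    then have "sat S (\<lambda>j. if j \<in> set is then g j else (e(i := g i)) j) \<phi>"
      by (rule back_subst[where P = "\<lambda>e. sat S e \<phi>"]) auto
    then show "\<exists>a g. sat S (\<lambda>j. if j \<in> set is then g j else (e(i := a)) j) \<phi>"
      by blast
  qed
  then show ?case using Cons by simp
qed simp

lemma fv_FExs: "fv (FExs is \<phi>) = fv \<phi> - set is"
  by (induction "is") auto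

lemma params_FExs: "params (FExs is \<phi>) = params \<phi>"
  by (induction "is") auto

definition FTrue :: "('f, 'r, 'u) fm" where
  "FTrue = FEx 0 (FEq (Var 0) (Var 0))"

lemma sat_FTrue [simp]: "sat S e FTrue"
  and fv_FTrue [simp]: "fv FTrue = {}"
  and params_FTrue [simp]: "params FTrue = {}"
  by (auto simp: FTrue_def)

fun FEqs :: "(nat \<times> nat) list \<Rightarrow> ('f, 'r, 'u) fm" where
  "FEqs [] = FTrue"
| "FEqs ((i, j) # E) = FConj (FEq (Var i) (Var j)) (FEqs E)"

lemma sat_FEqs: "sat S e (FEqs E) \<longleftrightarrow> (\<forall>(i, j)\<in>set E. e i = e j)"
  by (induction E rule: FEqs.induct) auto

lemma fv_FEqs: "fv (FEqs E) = fst ` set E \<union> snd ` set E"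
  by (induction E rule: FEqs.induct) auto

lemma params_FEqs [simp]: "params (FEqs E) = {}"
  by (induction E rule: FEqs.induct) auto

text \<open>\<open>FEx_linked n N E \<psi>\<close> expresses \<open>\<exists>u. \<psi>(u) \<and> (\<forall>(i, j) \<in> E. x\<^sub>i = u\<^sub>j)\<close>; the \<open>N\<close>-tuple
  \<open>u\<close> is held by the variables \<open>n, \<dots>, n + N - 1\<close>, which are fresh for the \<open>n\<close>-tuple \<open>x\<close>.\<close>

definition FEx_linked :: "nat \<Rightarrow> nat \<Rightarrow> (nat \<times> nat) list \<Rightarrow> ('f, 'r, 'u) fm \<Rightarrow> ('f, 'r, 'u) fm" where
  "FEx_linked n N E \<psi> =
    FExs [n..<n + N] (FConj (FEqs (map (\<lambda>(i, j). (i, n + j)) E)) (rename ((+) n) \<psi>))"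

lemma fm_in_FEx_linked:
  assumes "fm_in N B \<psi>" "\<forall>(i, j)\<in>set E. i < n \<and> j < N"
  shows "fm_in n B (FEx_linked n N E \<psi>)"
proof -
  have "fv (FEqs (map (\<lambda>(i, j). (i, n + j)) E)) \<subseteq> {..<n + N}"
    using assms(2) by (auto simp: fv_FEqs)
  moreover have "fv (rename ((+) n) \<psi>) \<subseteq> {..<n + N}"
    using assms(1) by (auto simp: fv_rename fm_in_def)
  ultimately show ?thesis
    using assms(1) by (auto simp: fm_in_def FEx_linked_def fv_FExs params_FExs params_rename)
qed

lemma sat_FEx_linked:
  assumes \<psi>: "fm_in N B \<psi>" and E: "\<forall>(i, j)\<in>set E. i < n \<and> j < N" and "length v = n"
  shows "sat S (\<lambda>i. v ! i) (FEx_linked n N E \<psi>) \<longleftrightarrow>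
    (\<exists>u. length u = N \<and> sat S (\<lambda>j. u ! j) \<psi> \<and> (\<forall>(i, j)\<in>set E. v ! i = u ! j))"
    (is "_ \<longleftrightarrow> (\<exists>u. length u = N \<and> ?P u)")
proof -
  have "sat S (\<lambda>i. v ! i) (FEx_linked n N E \<psi>) \<longleftrightarrow> (\<exists>g. ?P (map (\<lambda>j. g (n + j)) [0..<N]))"
  proof (unfold FEx_linked_def sat_FExs, intro ex_cong1)
    fix g
    let ?e = "\<lambda>j. if j \<in> set [n..<n + N] then g j else v ! j"
    have "sat S (?e \<circ> (+) n) \<psi> \<longleftrightarrow> sat S (\<lambda>j. map (\<lambda>j. g (n + j)) [0..<N] ! j) \<psi>"
      using \<psi> by (intro sat_cong) (auto simp: fm_in_def)
    moreover have "sat S ?e (FEqs (map (\<lambda>(i, j). (i, n + j)) E)) \<longleftrightarrow>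
        (\<forall>(i, j)\<in>set E. v ! i = map (\<lambda>j. g (n + j)) [0..<N] ! j)"
      using E by (fastforce simp: sat_FEqs)
    ultimately show "sat S ?e (FConj (FEqs (map (\<lambda>(i, j). (i, n + j)) E)) (rename ((+) n) \<psi>))
        \<longleftrightarrow> ?P (map (\<lambda>j. g (n + j)) [0..<N])"
      by (auto simp: sat_rename)
  qed
  also have "\<dots> \<longleftrightarrow> (\<exists>u. length u = N \<and> ?P u)"
  proof
    assume "\<exists>u. length u = N \<and> ?P u"
    then obtain u where "length u = N" "?P u"
      by blast
    moreover have "map (\<lambda>j. u ! (n + j - n)) [0..<N] = u"
      using \<open>length u = N\<close> map_nth[of u] by simp
    ultimately show "\<exists>g. ?P (map (\<lambda>j. g (n + j)) [0..<N])"
      by (intro exI[of _ "\<lambda>j. u ! (j - n)"]) simp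
  next
    assume "\<exists>g. ?P (map (\<lambda>j. g (n + j)) [0..<N])"
    then show "\<exists>u. length u = N \<and> ?P u"
      by (metis diff_zero length_map length_upt)
  qed
  finally show ?thesis .
qed

lemma Defs_exists_coordinate_eqs:
  assumes Y: "Y \<in> Defs S N B" and E: "\<forall>(i, j)\<in>set E. i < n \<and> j < N"
  shows "{v. length v = n \<and> (\<exists>u\<in>Y. \<forall>(i, j)\<in>set E. v ! i = u ! j)} \<in> Defs S n B"
proof -
  obtain \<psi> where Y_def: "Y = defset S N \<psi>" and \<psi>: "fm_in N B \<psi>"
    using Y by (auto simp: Defs_def)
  have "defset S n (FEx_linked n N E \<psi>) = {v. length v = n \<and> (\<exists>u\<in>Y. \<forall>(i, j)\<in>set E. v ! i = u ! j)}"
    using sat_FEx_linked[OF \<psi> E, where S = S] by (auto simp: defset_def Y_def)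
  then show ?thesis
    using fm_in_FEx_linked[OF \<psi> E] unfolding Defs_def by blast
qed

lemma Defs_subset_tuples: "X \<in> Defs S n B \<Longrightarrow> X \<subseteq> {v. length v = n}"
  by (auto simp: Defs_def defset_def)

lemma Defs_mono: "B \<subseteq> B' \<Longrightarrow> Defs S n B \<subseteq> Defs S n B'"
  by (auto simp: Defs_def fm_in_def)

lemma algebra_Defs: "algebra {v. length v = n} (Defs S n B)"
proof -
  have top: "{v. length v = n} \<in> Defs S n B"
    using defset_def[of S n FTrue] by (auto simp: Defs_def fm_in_def)
  have compl: "{v. length v = n} - X \<in> Defs S n B" if X: "X \<in> Defs S n B" for X
  proof -
    obtain \<phi> where "X = defset S n \<phi>" "fm_in n B \<phi>"
      using X unfolding Defs_def by blast
    then have "{v. length v = n} - X = defset S n (FNeg \<phi>)" "fm_in n B (FNeg \<phi>)"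
      by (auto simp: defset_def fm_in_def)
    then show ?thesis
      by (auto simp: Defs_def)
  qed
  have Int: "X \<inter> Y \<in> Defs S n B" if XY: "X \<in> Defs S n B" "Y \<in> Defs S n B" for X Y
  proof -
    obtain \<phi> \<psi> where "X = defset S n \<phi>" "fm_in n B \<phi>" "Y = defset S n \<psi>" "fm_in n B \<psi>"
      using XY unfolding Defs_def by blast
    then have "X \<inter> Y = defset S n (FConj \<phi> \<psi>)" "fm_in n B (FConj \<phi> \<psi>)"
      by (auto simp: defset_def fm_in_def)
    then show ?thesis
      by (auto simp: Defs_def)
  qed
  have "{} \<in> Defs S n B"
    using compl[OF top] by simp
  then show ?thesis
    unfolding algebra_iff_Int using Defs_subset_tuples compl Int by blast
qed

definition coords :: "(nat \<Rightarrow> nat) \<Rightarrow> nat \<Rightarrow> 'a list \<Rightarrow> 'a list" where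
  "coords r n u = map (\<lambda>i. u ! r i) [0..<n]"

definition pullback :: "(nat \<Rightarrow> nat) \<Rightarrow> nat \<Rightarrow> nat \<Rightarrow> 'a list set \<Rightarrow> 'a list set" where
  "pullback r n N X = {u. length u = N \<and> coords r n u \<in> X}"

lemma length_coords [simp]: "length (coords r n u) = n"
  by (simp add: coords_def)

lemma nth_coords [simp]: "i < n \<Longrightarrow> coords r n u ! i = u ! r i"
  by (simp add: coords_def)

lemma coords_coords: "\<forall>i<n. r' i < n' \<Longrightarrow> coords r' n (coords r n' u) = coords (r \<circ> r') n u"
  by (simp add: coords_def)

lemma coords_cong: "\<forall>i<n. r i = r' i \<Longrightarrow> coords r n u = coords r' n u"
  by (simp add: coords_def)

lemma coords_id: "length u = n \<Longrightarrow> coords id n u = u"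
  unfolding coords_def using map_nth[of u] by simp

lemma coords_id_eq_take: "n \<le> length u \<Longrightarrow> coords id n u = take n u"
  by (intro nth_equalityI) auto

lemma coords_add_eq_drop: "length u = n + m \<Longrightarrow> coords ((+) n) m u = drop n u"
  by (intro nth_equalityI) auto

lemma coords_surj:
  assumes "inj_on r {..<n}" "\<forall>i<n. r i < N" "length v = n"
  obtains u where "length u = N" "coords r n u = v"
proof
  let ?u = "map (\<lambda>j. if j \<in> r ` {..<n} then v ! the_inv_into {..<n} r j else undefined) [0..<N]"
  show "length ?u = N"
    by simp
  show "coords r n ?u = v"
    using assms the_inv_into_f_f[OF assms(1)] by (intro nth_equalityI) auto
qed

lemma pullback_tuples [simp]: "pullback r n N {v. length v = n} = {u. length u = N}"
  and pullback_Int: "pullback r n N (X \<inter> Y) = pullback r n N X \<inter> pullback r n N Y"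
  and pullback_Un: "pullback r n N (X \<union> Y) = pullback r n N X \<union> pullback r n N Y"
  and pullback_Diff: "pullback r n N (X - Y) = pullback r n N X - pullback r n N Y"
  by (auto simp: pullback_def)

lemma pullback_pullback:
  "\<forall>i<n. r' i < n' \<Longrightarrow> pullback r n' N (pullback r' n n' X) = pullback (r \<circ> r') n N X"
  by (auto simp: pullback_def coords_coords)

lemma pullback_cong: "\<forall>i<n. r i = r' i \<Longrightarrow> pullback r n N X = pullback r' n N X"
  by (simp add: pullback_def coords_cong[of n r r'])

lemma pullback_id: "X \<subseteq> {u. length u = N} \<Longrightarrow> pullback id N N X = X"
  by (auto simp: pullback_def coords_id)

lemma image_coords_pullback:
  assumes "inj_on r {..<n}" "\<forall>i<n. r i < N" "X \<subseteq> {v. length v = n}"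
  shows "coords r n ` pullback r n N X = X"
proof (intro equalityI subsetI)
  fix v
  assume "v \<in> X"
  moreover obtain u where "length u = N" "coords r n u = v"
    using coords_surj[OF assms(1,2)] \<open>v \<in> X\<close> assms(3) by blast
  ultimately show "v \<in> coords r n ` pullback r n N X"
    by (auto simp: pullback_def)
qed (auto simp: pullback_def)

lemma image_coords_id: "X \<subseteq> {u. length u = N} \<Longrightarrow> coords id N ` X = X"
  using image_coords_pullback[of id N N X] pullback_id[of X N] by simp

lemma Defs_pullback:
  assumes X: "X \<in> Defs S n B" and r: "\<forall>i<n. r i < N"
  shows "pullback r n N X \<in> Defs S N B"
proof -
  let ?E = "map (\<lambda>i. (r i, i)) [0..<n]"
  have "pullback r n N X = {u. length u = N \<and> (\<exists>v\<in>X. \<forall>(i, j)\<in>set ?E. u ! i = v ! j)}"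
  proof (intro equalityI subsetI)
    fix u
    assume "u \<in> {u. length u = N \<and> (\<exists>v\<in>X. \<forall>(i, j)\<in>set ?E. u ! i = v ! j)}"
    then obtain v where "length u = N" "v \<in> X" "\<forall>j<n. u ! r j = v ! j"
      by auto
    moreover have "length v = n"
      using \<open>v \<in> X\<close> Defs_subset_tuples[OF X] by blast
    ultimately have "coords r n u = v"
      by (intro nth_equalityI) auto
    then show "u \<in> pullback r n N X"
      using \<open>length u = N\<close> \<open>v \<in> X\<close> by (simp add: pullback_def)
  qed (auto simp: pullback_def intro!: bexI[of _ "coords r n _"])
  then show ?thesis
    using Defs_exists_coordinate_eqs[OF X, of ?E] r by auto
qed

lemma Defs_image_coords:
  assumes Y: "Y \<in> Defs S N B" and r: "\<forall>i<n. r i < N"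
  shows "coords r n ` Y \<in> Defs S n B"
proof -
  let ?E = "map (\<lambda>i. (i, r i)) [0..<n]"
  have "coords r n ` Y = {v. length v = n \<and> (\<exists>u\<in>Y. \<forall>(i, j)\<in>set ?E. v ! i = u ! j)}"
  proof (intro equalityI subsetI)
    fix v
    assume "v \<in> {v. length v = n \<and> (\<exists>u\<in>Y. \<forall>(i, j)\<in>set ?E. v ! i = u ! j)}"
    then obtain u where "length v = n" "u \<in> Y" "\<forall>j<n. v ! j = u ! r j"
      by auto
    then have "coords r n u = v"
      by (intro nth_equalityI) auto
    then show "v \<in> coords r n ` Y"
      using \<open>u \<in> Y\<close> by blast
  qed auto
  then show ?thesis
    using Defs_exists_coordinate_eqs[OF Y, of ?E] r by auto
qed

lemma image_pullback_id_Defs: "pullback id N N ` Defs S N B = Defs S N B"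
proof -
  have "pullback id N N ` Defs S N B = id ` Defs S N B"
    by (intro image_cong refl) (simp add: pullback_id Defs_subset_tuples)
  then show ?thesis
    by simp
qed

section \<open>Keisler measures and their marginals\<close>

lemma keisler_iff_fa_probability:
  "keisler S n B \<mu> \<longleftrightarrow>
    fa_probability {v. length v = n} (Defs S n B) \<mu> \<and> (\<forall>X. X \<notin> Defs S n B \<longrightarrow> \<mu> X = 0)"
  using algebra_Defs[of n S B]
  by (auto simp: keisler_def fa_probability_def fa_probability_axioms_def additive_def)

lemma keisler_fa_probability: "keisler S n B \<mu> \<Longrightarrow> fa_probability {v. length v = n} (Defs S n B) \<mu>"
  by (simp add: keisler_iff_fa_probability)

lemma keisler_eq_0: "keisler S n B \<mu> \<Longrightarrow> X \<notin> Defs S n B \<Longrightarrow> \<mu> X = 0"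
  by (simp add: keisler_def)

lemma keisler_restrI:
  assumes "fa_probability {v. length v = n} M \<mu>" "Defs S n B \<subseteq> M"
  shows "keisler S n B (restr S n B \<mu>)"
proof -
  interpret fa_probability "{v. length v = n}" "Defs S n B" \<mu>
    by (rule fa_probability.subalgebra[OF assms(1) algebra_Defs assms(2)])
  show ?thesis
    using total nonneg measure_Un by (auto simp: keisler_def restr_def)
qed

lemma keisler_restr: "keisler S n B' \<mu> \<Longrightarrow> B \<subseteq> B' \<Longrightarrow> keisler S n B (restr S n B \<mu>)"
  by (rule keisler_restrI[OF keisler_fa_probability Defs_mono])

definition marginal :: "('f, 'r, 'u) struc \<Rightarrow> (nat \<Rightarrow> nat) \<Rightarrow> nat \<Rightarrow> nat \<Rightarrow> 'u set \<Rightarrow>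
    ('u list set \<Rightarrow> real) \<Rightarrow> ('u list set \<Rightarrow> real)" where
  "marginal S r n N B \<omega> = (\<lambda>X. if X \<in> Defs S n B then \<omega> (pullback r n N X) else 0)"

lemma pi_x_eq_marginal: "pi_x S n m B \<omega> = marginal S id n (n + m) B \<omega>"
proof -
  have "{v @ w |v w. v \<in> X \<and> length w = m} = pullback id n (n + m) X"
    if "X \<subseteq> {v. length v = n}" for X :: "'a list set"
  proof (intro equalityI subsetI)
    fix u
    assume "u \<in> pullback id n (n + m) X"
    then show "u \<in> {v @ w |v w. v \<in> X \<and> length w = m}"
      by (intro CollectI exI[of _ "take n u"] exI[of _ "drop n u"])
        (auto simp: pullback_def coords_id_eq_take)
  qed (use that in \<open>auto simp: pullback_def coords_id_eq_take\<close>)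
  then show ?thesis
    by (auto simp: pi_x_def marginal_def fun_eq_iff Defs_subset_tuples)
qed

lemma pi_y_eq_marginal: "pi_y S n m B \<omega> = marginal S ((+) n) m (n + m) B \<omega>"
proof -
  have "{v @ w |v w. length v = n \<and> w \<in> Y} = pullback ((+) n) m (n + m) Y"
    if "Y \<subseteq> {w. length w = m}" for Y :: "'a list set"
  proof (intro equalityI subsetI)
    fix u
    assume "u \<in> pullback ((+) n) m (n + m) Y"
    then show "u \<in> {v @ w |v w. length v = n \<and> w \<in> Y}"
      by (intro CollectI exI[of _ "take n u"] exI[of _ "drop n u"])
        (auto simp: pullback_def coords_add_eq_drop)
  qed (use that in \<open>auto simp: pullback_def coords_add_eq_drop\<close>)
  then show ?thesis
    by (auto simp: pi_y_def marginal_def fun_eq_iff Defs_subset_tuples)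
qed

lemma keisler_marginal:
  assumes "keisler S N B' \<omega>" "B \<subseteq> B'" "\<forall>i<n. r i < N"
  shows "keisler S n B (marginal S r n N B \<omega>)"
proof -
  interpret fa_probability "{u. length u = N}" "Defs S N B'" \<omega>
    using keisler_fa_probability[OF assms(1)] .
  interpret D: algebra "{v. length v = n}" "Defs S n B"
    by (rule algebra_Defs)
  have pullback_Defs: "pullback r n N X \<in> Defs S N B'" if "X \<in> Defs S n B" for X
    using Defs_pullback[OF that assms(3)] Defs_mono[OF assms(2)] by blast
  have "marginal S r n N B \<omega> (X \<union> Y) = marginal S r n N B \<omega> X + marginal S r n N B \<omega> Y"
    if "X \<in> Defs S n B" "Y \<in> Defs S n B" "X \<inter> Y = {}" for X Y
  proof -
    have "pullback r n N X \<inter> pullback r n N Y = {}"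
      using that(3) by (auto simp: pullback_def)
    then show ?thesis
      using that pullback_Defs measure_Un D.Un by (simp add: marginal_def pullback_Un)
  qed
  then show ?thesis
    using pullback_Defs nonneg total D.top
    by (auto simp: keisler_def marginal_def)
qed

lemma marginal_marginal:
  assumes "\<forall>i<n. r' i < n'" "B \<subseteq> B'"
  shows "marginal S r' n n' B (marginal S r n' N B' \<omega>) = marginal S (r \<circ> r') n N B \<omega>"
  using Defs_pullback[OF _ assms(1), of _ S B] Defs_mono[OF assms(2), of S n']
  by (auto simp: marginal_def fun_eq_iff pullback_pullback[OF assms(1)])

lemma marginal_cong: "\<forall>i<n. r i = r' i \<Longrightarrow> marginal S r n N B \<omega> = marginal S r' n N B \<omega>"
  unfolding marginal_def by (subst pullback_cong[of n r r']) simp_all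

lemma marginal_id: "marginal S id N N B \<omega> = restr S N B \<omega>"
  by (auto simp: marginal_def restr_def fun_eq_iff pullback_id Defs_subset_tuples)

lemma marginal_restr:
  assumes "\<forall>i<n. r i < N" "B \<subseteq> C"
  shows "marginal S r n N B (restr S N C \<omega>) = marginal S r n N B \<omega>"
  using Defs_pullback[OF _ assms(1), of _ S B] Defs_mono[OF assms(2), of S N]
  by (auto simp: marginal_def restr_def fun_eq_iff)

lemma restr_marginal: "B \<subseteq> B' \<Longrightarrow> restr S n B (marginal S r n N B' \<omega>) = marginal S r n N B \<omega>"
  using Defs_mono[of B B' S n] by (auto simp: marginal_def restr_def fun_eq_iff)

lemma algebra_pullback:
  assumes "algebra {v. length v = n} A"
  shows "algebra {u. length u = N} (pullback r n N ` A)"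
  unfolding algebra_iff_Int
proof (intro conjI ballI)
  interpret algebra "{v. length v = n}" A
    by (fact assms)
  show "pullback r n N ` A \<subseteq> Pow {u. length u = N}"
    by (auto simp: pullback_def)
  have "pullback r n N {} = {}"
    by (simp add: pullback_def)
  then show "{} \<in> pullback r n N ` A"
    by (metis empty_sets image_eqI)
  fix Z Z'
  assume "Z \<in> pullback r n N ` A" "Z' \<in> pullback r n N ` A"
  then obtain X X' where "X \<in> A" "Z = pullback r n N X" "X' \<in> A" "Z' = pullback r n N X'"
    by blast
  moreover have "{u. length u = N} - pullback r n N X = pullback r n N ({v. length v = n} - X)"
    by (simp add: pullback_Diff)
  ultimately show "{u. length u = N} - Z \<in> pullback r n N ` A" "Z \<inter> Z' \<in> pullback r n N ` A"
    by (auto simp: pullback_Int[symmetric])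
qed

lemma fa_probability_pushforward:
  assumes "keisler S n B \<mu>" "inj_on r {..<n}" "\<forall>i<n. r i < N"
  shows "fa_probability {u. length u = N} (pullback r n N ` Defs S n B) (\<lambda>Z. \<mu> (coords r n ` Z))"
proof -
  interpret fa_probability "{v. length v = n}" "Defs S n B" \<mu>
    using keisler_fa_probability[OF assms(1)] .
  have coords_pullback: "coords r n ` pullback r n N X = X" if "X \<in> Defs S n B" for X
    using image_coords_pullback[OF assms(2,3)] sets_into_space that by blast
  have "\<mu> (coords r n ` (pullback r n N X \<union> pullback r n N Y)) =
      \<mu> (coords r n ` pullback r n N X) + \<mu> (coords r n ` pullback r n N Y)"
    if "X \<in> Defs S n B" "Y \<in> Defs S n B" "pullback r n N X \<inter> pullback r n N Y = {}" for X Y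
  proof -
    have "X \<inter> Y = {}"
      using that coords_pullback[of "X \<inter> Y"] Int by (simp add: pullback_Int)
    then show ?thesis
      using that coords_pullback[of "X \<union> Y"] coords_pullback measure_Un Un
      by (simp add: pullback_Un[symmetric])
  qed
  moreover have "algebra {u. length u = N} (pullback r n N ` Defs S n B)"
    by (rule algebra_pullback[OF algebra_Defs])
  ultimately show ?thesis
    using total nonneg coords_pullback
      coords_pullback[OF top] image_coords_pullback[OF assms(2,3), of "{v. length v = n}"]
    by (auto simp: fa_probability_def fa_probability_axioms_def additive_def)
qed

lemma marginal_restr_UNIV_eq:
  assumes "keisler S n B \<nu>" "inj_on r {..<n}" "\<forall>i<n. r i < N"
    and "\<forall>X\<in>Defs S n B. \<mu> (pullback r n N X) = \<nu> (coords r n ` pullback r n N X)"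
  shows "marginal S r n N B (restr S N UNIV \<mu>) = \<nu>"
proof
  fix X
  show "marginal S r n N B (restr S N UNIV \<mu>) X = \<nu> X"
  proof (cases "X \<in> Defs S n B")
    case True
    then have "pullback r n N X \<in> Defs S N UNIV"
      using Defs_pullback[OF True assms(3)] Defs_mono[of B UNIV S N] by blast
    then show ?thesis
      using True assms(4) image_coords_pullback[OF assms(2,3) Defs_subset_tuples[OF True]]
      by (simp add: marginal_def restr_def)
  qed (simp add: marginal_def keisler_eq_0[OF assms(1)])
qed

lemma keisler_amalgamation:
  assumes \<mu>1: "keisler S n1 B1 \<mu>1" "inj_on r1 {..<n1}" "\<forall>i<n1. r1 i < N"
    and \<mu>2: "keisler S n2 B2 \<mu>2" "inj_on r2 {..<n2}" "\<forall>i<n2. r2 i < N"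
    and A0: "algebra {u. length u = N} A0"
      "A0 \<subseteq> pullback r1 n1 N ` Defs S n1 B1" "A0 \<subseteq> pullback r2 n2 N ` Defs S n2 B2"
    and agree: "\<And>c. c \<in> A0 \<Longrightarrow> \<mu>1 (coords r1 n1 ` c) = \<mu>2 (coords r2 n2 ` c)"
    and separated: "\<And>X Y. X \<in> Defs S n1 B1 \<Longrightarrow> Y \<in> Defs S n2 B2 \<Longrightarrow>
      pullback r1 n1 N X \<inter> pullback r2 n2 N Y = {} \<Longrightarrow>
      \<exists>c\<in>A0. pullback r1 n1 N X \<subseteq> c \<and> c \<inter> pullback r2 n2 N Y = {}"
  shows "\<exists>\<Omega>. keisler S N UNIV \<Omega> \<and> marginal S r1 n1 N B1 \<Omega> = \<mu>1 \<and> marginal S r2 n2 N B2 \<Omega> = \<mu>2"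
proof -
  let ?A1 = "pullback r1 n1 N ` Defs S n1 B1" and ?A2 = "pullback r2 n2 N ` Defs S n2 B2"
  have "\<exists>c\<in>A0. a \<subseteq> c \<and> c \<inter> b = {}" if "a \<in> ?A1" "b \<in> ?A2" "a \<inter> b = {}" for a b
    using that separated by blast
  then interpret amalgamable "{u. length u = N}" A0 ?A1 ?A2
    "\<lambda>Z. \<mu>1 (coords r1 n1 ` Z)" "\<lambda>Z. \<mu>2 (coords r2 n2 ` Z)"
    using fa_probability_pushforward[OF \<mu>1] fa_probability_pushforward[OF \<mu>2] A0 agree
    by (simp add: amalgamable_def amalgamable_axioms_def)
  obtain \<mu> where fa: "fa_probability {u. length u = N} (Pow {u. length u = N}) \<mu>"
    and on_A1: "\<forall>a\<in>?A1. \<mu> a = \<mu>1 (coords r1 n1 ` a)"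
    and on_A2: "\<forall>b\<in>?A2. \<mu> b = \<mu>2 (coords r2 n2 ` b)"
    using amalgamation by blast
  have "keisler S N UNIV (restr S N UNIV \<mu>)"
    using Defs_subset_tuples[of _ S N UNIV] by (intro keisler_restrI[OF fa]) blast
  then show ?thesis
    using marginal_restr_UNIV_eq[OF \<mu>1] marginal_restr_UNIV_eq[OF \<mu>2] on_A1 on_A2 by blast
qed

lemma pullback_separation:
  assumes "Y \<subseteq> {u. length u = N}" "pullback r n N X \<inter> Y = {}"
  shows "pullback r n N X \<subseteq> pullback r n N ({v. length v = n} - coords r n ` Y)"
    and "pullback r n N ({v. length v = n} - coords r n ` Y) \<inter> Y = {}"
proof
  fix u
  assume u: "u \<in> pullback r n N X"
  have "y \<notin> Y" if "coords r n y = coords r n u" "length y = N" for y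
    using that u assms(2) by (auto simp: pullback_def)
  then have "coords r n u \<notin> coords r n ` Y"
    using assms(1) by auto
  then show "u \<in> pullback r n N ({v. length v = n} - coords r n ` Y)"
    using u by (simp add: pullback_def)
qed (auto simp: pullback_def)

lemma keisler_extension:
  assumes \<mu>: "keisler S n UNIV \<mu>" and r: "inj_on r {..<n}" "\<forall>i<n. r i < N"
    and \<theta>: "keisler S N C \<theta>" and agree: "marginal S r n N C \<theta> = restr S n C \<mu>"
  shows "\<exists>\<Omega>. keisler S N UNIV \<Omega> \<and> marginal S r n N UNIV \<Omega> = \<mu> \<and> restr S N C \<Omega> = \<theta>"
proof -
  let ?A0 = "pullback r n N ` Defs S n C"
  have A0_Defs: "?A0 \<subseteq> Defs S N C"
    using Defs_pullback[OF _ r(2)] by blast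
  have "\<exists>\<Omega>. keisler S N UNIV \<Omega> \<and> marginal S r n N UNIV \<Omega> = \<mu> \<and> marginal S id N N C \<Omega> = \<theta>"
  proof (rule keisler_amalgamation[OF \<mu> r \<theta> _ _ algebra_pullback[OF algebra_Defs]])
    show "inj_on id {..<N}" "\<forall>i<N. id i < N"
      by simp_all
    show "?A0 \<subseteq> pullback r n N ` Defs S n UNIV"
      using Defs_mono[of C UNIV S n] by blast
    show "?A0 \<subseteq> pullback id N N ` Defs S N C"
      using A0_Defs by (simp only: image_pullback_id_Defs)
    fix c
    assume "c \<in> ?A0"
    then obtain X where X: "X \<in> Defs S n C" "c = pullback r n N X"
      by blast
    have "c \<in> Defs S N C"
      using A0_Defs \<open>c \<in> ?A0\<close> by blast
    then have "coords id N ` c = c"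
      by (rule image_coords_id[OF Defs_subset_tuples])
    then have "\<theta> (coords id N ` c) = marginal S r n N C \<theta> X"
      using X by (simp add: marginal_def)
    then show "\<mu> (coords r n ` c) = \<theta> (coords id N ` c)"
      using X agree image_coords_pullback[OF r Defs_subset_tuples[OF X(1)]] by (simp add: restr_def)
  next
    fix X Y
    assume "Y \<in> Defs S N C" "pullback r n N X \<inter> pullback id N N Y = {}"
    then have "Y \<subseteq> {u. length u = N}" "pullback r n N X \<inter> Y = {}"
      using pullback_id[OF Defs_subset_tuples] Defs_subset_tuples by metis+
    moreover have "pullback r n N ({v. length v = n} - coords r n ` Y) \<in> ?A0"
      using algebra.compl_sets[OF algebra_Defs Defs_image_coords[OF \<open>Y \<in> Defs S N C\<close> r(2)]]
      by blast
    ultimately show "\<exists>c\<in>?A0. pullback r n N X \<subseteq> c \<and> c \<inter> pullback id N N Y = {}"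
      using pullback_separation pullback_id by metis
  qed
  then show ?thesis
    by (simp add: marginal_id)
qed

lemma coords_glue:
  assumes "length u = n + m + k" "length y = m + k" "coords ((+) n) m u = take m y"
  shows "coords id (n + m) (take (n + m) u @ drop m y) = coords id (n + m) u"
    and "coords ((+) n) (m + k) (take (n + m) u @ drop m y) = y"
proof -
  show "coords id (n + m) (take (n + m) u @ drop m y) = coords id (n + m) u"
    using assms(1) by (intro nth_equalityI) (auto simp: nth_append)
  have "u ! (n + j) = y ! j" if "j < m" for j
    using arg_cong[OF assms(3), of "\<lambda>v. v ! j"] that by simp
  then show "coords ((+) n) (m + k) (take (n + m) u @ drop m y) = y"
    using assms(1,2) by (intro nth_equalityI) (auto simp: nth_append)
qed

lemma pullback_glue_separation:
  fixes n m k N :: nat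
  defines "N \<equiv> n + m + k"
  assumes Y: "Y \<subseteq> {w. length w = m + k}"
    and disjoint: "pullback id (n + m) N X \<inter> pullback ((+) n) (m + k) N Y = {}"
  shows "pullback id (n + m) N X \<subseteq> pullback ((+) n) m N ({v. length v = m} - coords id m ` Y)"
    and "pullback ((+) n) m N ({v. length v = m} - coords id m ` Y) \<inter>
      pullback ((+) n) (m + k) N Y = {}"
proof
  fix u
  assume u: "u \<in> pullback id (n + m) N X"
  have "y \<notin> Y" if "length y = m + k" "coords ((+) n) m u = coords id m y" for y
  proof
    assume "y \<in> Y"
    with that u have "take (n + m) u @ drop m y \<in> pullback id (n + m) N X \<inter> pullback ((+) n) (m + k) N Y"
      using coords_glue[of u n m k y] by (auto simp: pullback_def N_def coords_id_eq_take)
    then show False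
      using disjoint by blast
  qed
  then have "coords ((+) n) m u \<notin> coords id m ` Y"
    using Y by auto
  then show "u \<in> pullback ((+) n) m N ({v. length v = m} - coords id m ` Y)"
    using u by (simp add: pullback_def)
next
  have "coords id m (coords ((+) n) (m + k) u) = coords ((+) n) m u" for u :: "'a list"
    by (simp add: coords_coords)
  then show "pullback ((+) n) m N ({v. length v = m} - coords id m ` Y) \<inter>
      pullback ((+) n) (m + k) N Y = {}"
    by (auto simp: pullback_def) (metis imageI)
qed

lemma keisler_glue:
  assumes \<omega>: "keisler S (n + m) UNIV \<omega>" and \<rho>: "keisler S (m + k) B \<rho>"
    and agree: "pi_y S n m B \<omega> = pi_x S m k B \<rho>"
  shows "\<exists>\<Omega>. keisler S (n + m + k) UNIV \<Omega> \<and> pi_x S (n + m) k UNIV \<Omega> = \<omega> \<and>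
    pi_y S n (m + k) B \<Omega> = \<rho>"
proof -
  define N where "N = n + m + k"
  let ?A0 = "pullback ((+) n) m N ` Defs S m B"
  have via_xy: "pullback ((+) n) m N Y = pullback id (n + m) N (pullback ((+) n) m (n + m) Y)" for Y
    by (simp add: pullback_pullback)
  have via_yz: "pullback ((+) n) m N Y = pullback ((+) n) (m + k) N (pullback id m (m + k) Y)" for Y
    by (simp add: pullback_pullback)
  have "\<exists>\<Omega>. keisler S N UNIV \<Omega> \<and> marginal S id (n + m) N UNIV \<Omega> = \<omega> \<and>
      marginal S ((+) n) (m + k) N B \<Omega> = \<rho>"
  proof (rule keisler_amalgamation[OF \<omega> _ _ \<rho> _ _ algebra_pullback[OF algebra_Defs]])
    show "inj_on id {..<n + m}" "\<forall>i<n + m. id i < N" "inj_on ((+) n) {..<m + k}"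
      "\<forall>i<m + k. n + i < N"
      by (simp_all add: N_def)
    show "?A0 \<subseteq> pullback id (n + m) N ` Defs S (n + m) UNIV"
      unfolding via_xy using Defs_pullback[of _ S m UNIV "(+) n" "n + m"] Defs_mono[of B UNIV S m]
      by (intro image_subsetI imageI) auto
    show "?A0 \<subseteq> pullback ((+) n) (m + k) N ` Defs S (m + k) B"
      unfolding via_yz using Defs_pullback[of _ S m B id "m + k"]
      by (intro image_subsetI imageI) auto
  next
    fix c
    assume "c \<in> ?A0"
    then obtain Y where Y: "Y \<in> Defs S m B" "c = pullback ((+) n) m N Y"
      by blast
    have "coords id (n + m) ` c = pullback ((+) n) m (n + m) Y"
      unfolding Y(2) via_xy by (rule image_coords_pullback) (auto simp: N_def pullback_def)
    moreover have "coords ((+) n) (m + k) ` c = pullback id m (m + k) Y"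
      unfolding Y(2) via_yz by (rule image_coords_pullback) (auto simp: N_def pullback_def)
    ultimately show "\<omega> (coords id (n + m) ` c) = \<rho> (coords ((+) n) (m + k) ` c)"
      using fun_cong[OF agree, of Y] Y(1) by (simp add: pi_x_eq_marginal pi_y_eq_marginal marginal_def)
  next
    fix X Y
    assume "Y \<in> Defs S (m + k) B"
      and "pullback id (n + m) N X \<inter> pullback ((+) n) (m + k) N Y = {}"
    moreover have "pullback ((+) n) m N ({v. length v = m} - coords id m ` Y) \<in> ?A0"
      using algebra.compl_sets[OF algebra_Defs Defs_image_coords[OF \<open>Y \<in> Defs S (m + k) B\<close>]] by simp
    ultimately show "\<exists>c\<in>?A0. pullback id (n + m) N X \<subseteq> c \<and> c \<inter> pullback ((+) n) (m + k) N Y = {}"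
      using pullback_glue_separation[where n = n and m = m and k = k and X = X and Y = Y]
        Defs_subset_tuples[OF \<open>Y \<in> Defs S (m + k) B\<close>] unfolding N_def by blast
  qed
  then show ?thesis
    by (simp add: pi_x_eq_marginal pi_y_eq_marginal N_def add.assoc)
qed

section \<open>Reflexivity and transitivity\<close>

definition geEA_witness :: "('f, 'r, 'u) struc \<Rightarrow> 'u set \<Rightarrow> nat \<Rightarrow> nat \<Rightarrow>
    ('u list set \<Rightarrow> real) \<Rightarrow> ('u list set \<Rightarrow> real) \<Rightarrow> ('u list set \<Rightarrow> real) \<Rightarrow> bool" where
  "geEA_witness S A n m \<theta> \<mu> \<nu> \<longleftrightarrow> keisler S (n + m) A \<theta> \<and> pi_x S n m A \<theta> = restr S n A \<mu> \<and>
     (\<forall>\<omega>. keisler S (n + m) UNIV \<omega> \<and> restr S (n + m) A \<omega> = \<theta> \<and> pi_x S n m UNIV \<omega> = \<mu> \<longrightarrow>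
        pi_y S n m UNIV \<omega> = \<nu>)"

lemma geEA_iff_witness: "geEA S A n m \<mu> \<nu> \<longleftrightarrow> (\<exists>\<theta>. geEA_witness S A n m \<theta> \<mu> \<nu>)"
  by (simp add: geEA_def geEA_witness_def)

text \<open>The variables of an \<open>(n + m + k)\<close>-tuple form the blocks \<open>x, y, z\<close> of lengths \<open>n, m, k\<close>;
  \<open>xz_index n m\<close> below maps the variables of \<open>xz\<close> to their positions in \<open>xyz\<close>.\<close>

definition joint_extension :: "('f, 'r, 'u) struc \<Rightarrow> 'u set \<Rightarrow> 'u set \<Rightarrow> nat \<Rightarrow> nat \<Rightarrow> nat \<Rightarrow>
    ('u list set \<Rightarrow> real) \<Rightarrow> ('u list set \<Rightarrow> real) \<Rightarrow> ('u list set \<Rightarrow> real) \<Rightarrow>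
    ('u list set \<Rightarrow> real) \<Rightarrow> bool" where
  "joint_extension S A B n m k \<mu> \<theta>1 \<theta>2 \<Omega> \<longleftrightarrow> keisler S (n + m + k) UNIV \<Omega> \<and>
     marginal S id n (n + m + k) UNIV \<Omega> = \<mu> \<and>
     restr S (n + m) A (pi_x S (n + m) k UNIV \<Omega>) = \<theta>1 \<and>
     restr S (m + k) B (pi_y S n (m + k) UNIV \<Omega>) = \<theta>2"

lemma joint_extension_z_marginal:
  assumes \<Omega>: "joint_extension S A B n m k \<mu> \<theta>1 \<theta>2 \<Omega>"
    and \<theta>1: "geEA_witness S A n m \<theta>1 \<mu> \<nu>" and \<theta>2: "geEA_witness S B m k \<theta>2 \<nu> \<eta>"
  shows "marginal S ((+) (n + m)) k (n + m + k) UNIV \<Omega> = \<eta>"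
proof -
  let ?\<omega>xy = "pi_x S (n + m) k UNIV \<Omega>" and ?\<omega>yz = "pi_y S n (m + k) UNIV \<Omega>"
  have \<Omega>_keisler: "keisler S (n + m + k) UNIV \<Omega>"
    using \<Omega> by (simp add: joint_extension_def)
  have "keisler S (n + m) UNIV ?\<omega>xy" "keisler S (m + k) UNIV ?\<omega>yz"
    using keisler_marginal[OF \<Omega>_keisler] by (simp_all add: pi_x_eq_marginal pi_y_eq_marginal add.assoc)
  moreover have "pi_x S n m UNIV ?\<omega>xy = \<mu>"
    using \<Omega> by (simp add: joint_extension_def pi_x_eq_marginal marginal_marginal)
  ultimately have "pi_y S n m UNIV ?\<omega>xy = \<nu>"
    using \<theta>1 \<Omega> by (simp add: geEA_witness_def joint_extension_def)
  then have "pi_x S m k UNIV ?\<omega>yz = \<nu>"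
    by (simp add: pi_x_eq_marginal pi_y_eq_marginal marginal_marginal add.assoc)
  with \<open>keisler S (m + k) UNIV ?\<omega>yz\<close> have "pi_y S m k UNIV ?\<omega>yz = \<eta>"
    using \<theta>2 \<Omega> by (simp add: geEA_witness_def joint_extension_def)
  moreover have "(+) n \<circ> (+) m = (+) (n + m)"
    by (simp add: fun_eq_iff)
  ultimately show ?thesis
    by (simp add: pi_y_eq_marginal marginal_marginal add.assoc)
qed

lemma joint_extension_exists:
  assumes \<mu>: "keisler S n UNIV \<mu>"
    and \<theta>1: "geEA_witness S A n m \<theta>1 \<mu> \<nu>" and \<theta>2: "geEA_witness S B m k \<theta>2 \<nu> \<eta>"
  shows "\<exists>\<Omega>. joint_extension S A B n m k \<mu> \<theta>1 \<theta>2 \<Omega>"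
proof -
  obtain \<omega> where \<omega>: "keisler S (n + m) UNIV \<omega>" "marginal S id n (n + m) UNIV \<omega> = \<mu>"
    "restr S (n + m) A \<omega> = \<theta>1"
    using keisler_extension[OF \<mu>, of id "n + m" A \<theta>1] \<theta>1 by (auto simp: geEA_witness_def pi_x_eq_marginal)
  then have "pi_y S n m UNIV \<omega> = \<nu>"
    using \<theta>1 by (simp add: geEA_witness_def pi_x_eq_marginal)
  moreover have "pi_y S n m B \<omega> = restr S m B (pi_y S n m UNIV \<omega>)"
    by (simp add: pi_y_eq_marginal restr_marginal)
  ultimately have "pi_y S n m B \<omega> = pi_x S m k B \<theta>2"
    using \<theta>2 by (simp add: geEA_witness_def)
  moreover have "keisler S (m + k) B \<theta>2"
    using \<theta>2 by (simp add: geEA_witness_def)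
  ultimately obtain \<Omega> where \<Omega>: "keisler S (n + m + k) UNIV \<Omega>" "pi_x S (n + m) k UNIV \<Omega> = \<omega>"
    "pi_y S n (m + k) B \<Omega> = \<theta>2"
    using keisler_glue[OF \<omega>(1)] by blast
  have "marginal S id n (n + m) UNIV (pi_x S (n + m) k UNIV \<Omega>) = marginal S id n (n + m + k) UNIV \<Omega>"
    by (simp add: pi_x_eq_marginal marginal_marginal)
  then have "joint_extension S A B n m k \<mu> \<theta>1 \<theta>2 \<Omega>"
    using \<Omega> \<omega> by (simp add: joint_extension_def pi_y_eq_marginal restr_marginal)
  then show ?thesis
    by blast
qed

lemma joint_extension_restr_cong:
  fixes n m k N :: nat
  defines "N \<equiv> n + m + k"
  assumes "joint_extension S A B n m k \<mu> \<theta>1 \<theta>2 \<Omega>1" "keisler S N UNIV \<Omega>"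
    and "marginal S id n N UNIV \<Omega> = \<mu>" and "restr S N (A \<union> B) \<Omega> = restr S N (A \<union> B) \<Omega>1"
  shows "joint_extension S A B n m k \<mu> \<theta>1 \<theta>2 \<Omega>"
proof -
  have same: "marginal S r n' N B' \<Omega> = marginal S r n' N B' \<Omega>1"
    if "B' \<subseteq> A \<union> B" "\<forall>i<n'. r i < N" for r n' B'
    using marginal_restr[OF that(2,1), of S \<Omega>] marginal_restr[OF that(2,1), of S \<Omega>1] assms(5) by metis
  have "restr S (n + m) A (pi_x S (n + m) k UNIV \<Omega>) = restr S (n + m) A (pi_x S (n + m) k UNIV \<Omega>1)"
    using same[where B' = A and r = id and n' = "n + m"]
    by (simp add: pi_x_eq_marginal restr_marginal N_def)
  moreover have "restr S (m + k) B (pi_y S n (m + k) UNIV \<Omega>) = restr S (m + k) B (pi_y S n (m + k) UNIV \<Omega>1)"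
    using same[where B' = B and r = "(+) n" and n' = "m + k"]
    by (simp add: pi_y_eq_marginal restr_marginal N_def add.assoc)
  ultimately show ?thesis
    using assms(2-4) by (simp add: joint_extension_def N_def)
qed

definition xz_index :: "nat \<Rightarrow> nat \<Rightarrow> nat \<Rightarrow> nat" where
  "xz_index n m i = (if i < n then i else m + i)"

lemma xz_index:
  "inj_on (xz_index n m) {..<n + k}" "\<forall>i<n + k. xz_index n m i < n + m + k"
  "\<forall>i<n. (xz_index n m \<circ> id) i = id i" "\<forall>i<k. (xz_index n m \<circ> (+) n) i = n + m + i"
  by (auto simp: xz_index_def inj_on_def)

lemma xz_extension_z_marginal:
  fixes n m k N :: nat
  defines "N \<equiv> n + m + k"
  assumes \<Omega>1: "joint_extension S A B n m k \<mu> \<theta>1 \<theta>2 \<Omega>1"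
    and \<theta>1: "geEA_witness S A n m \<theta>1 \<mu> \<nu>" and \<theta>2: "geEA_witness S B m k \<theta>2 \<nu> \<eta>"
    and \<omega>: "keisler S (n + k) UNIV \<omega>" "pi_x S n k UNIV \<omega> = \<mu>"
      "restr S (n + k) (A \<union> B) \<omega> = marginal S (xz_index n m) (n + k) N (A \<union> B) \<Omega>1"
  shows "pi_y S n k UNIV \<omega> = \<eta>"
proof -
  have "keisler S N UNIV \<Omega>1"
    using \<Omega>1 by (simp add: joint_extension_def N_def)
  then have "keisler S N (A \<union> B) (restr S N (A \<union> B) \<Omega>1)"
    by (simp add: keisler_restr)
  moreover have "marginal S (xz_index n m) (n + k) N (A \<union> B) (restr S N (A \<union> B) \<Omega>1) =
      restr S (n + k) (A \<union> B) \<omega>"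
    using \<omega>(3) xz_index by (simp add: marginal_restr N_def)
  ultimately obtain \<Omega> where \<Omega>: "keisler S N UNIV \<Omega>" "marginal S (xz_index n m) (n + k) N UNIV \<Omega> = \<omega>"
    "restr S N (A \<union> B) \<Omega> = restr S N (A \<union> B) \<Omega>1"
    using keisler_extension[OF \<omega>(1)] xz_index unfolding N_def by blast
  have "marginal S id n N UNIV \<Omega> = marginal S (xz_index n m \<circ> id) n N UNIV \<Omega>"
    using xz_index by (intro marginal_cong) simp
  also have "\<dots> = pi_x S n k UNIV \<omega>"
    unfolding \<Omega>(2)[symmetric] pi_x_eq_marginal by (rule marginal_marginal[symmetric]) simp_all
  finally have "joint_extension S A B n m k \<mu> \<theta>1 \<theta>2 \<Omega>"
    using joint_extension_restr_cong[OF \<Omega>1] \<Omega> \<omega>(2) by (simp add: N_def)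
  then have "marginal S ((+) (n + m)) k N UNIV \<Omega> = \<eta>"
    unfolding N_def using \<theta>1 \<theta>2 by (rule joint_extension_z_marginal)
  moreover have "pi_y S n k UNIV \<omega> = marginal S (xz_index n m \<circ> (+) n) k N UNIV \<Omega>"
    unfolding \<Omega>(2)[symmetric] pi_y_eq_marginal by (rule marginal_marginal) simp_all
  moreover have "\<dots> = marginal S ((+) (n + m)) k N UNIV \<Omega>"
    using xz_index by (intro marginal_cong) simp
  ultimately show ?thesis
    by simp
qed

lemma geEA_witness_xz_marginal:
  assumes \<Omega>1: "joint_extension S A B n m k \<mu> \<theta>1 \<theta>2 \<Omega>1"
    and \<theta>1: "geEA_witness S A n m \<theta>1 \<mu> \<nu>" and \<theta>2: "geEA_witness S B m k \<theta>2 \<nu> \<eta>"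
  shows "geEA_witness S (A \<union> B) n k
    (marginal S (xz_index n m) (n + k) (n + m + k) (A \<union> B) \<Omega>1) \<mu> \<eta>"
proof -
  define \<theta> where "\<theta> = marginal S (xz_index n m) (n + k) (n + m + k) (A \<union> B) \<Omega>1"
  have "keisler S (n + m + k) UNIV \<Omega>1"
    using \<Omega>1 by (simp add: joint_extension_def)
  then have "keisler S (n + k) (A \<union> B) \<theta>"
    unfolding \<theta>_def by (rule keisler_marginal) (simp_all add: xz_index(2))
  moreover have "pi_x S n k (A \<union> B) \<theta> = restr S n (A \<union> B) \<mu>"
  proof -
    have "pi_x S n k (A \<union> B) \<theta> = marginal S (xz_index n m \<circ> id) n (n + m + k) (A \<union> B) \<Omega>1"
      unfolding \<theta>_def pi_x_eq_marginal by (rule marginal_marginal) simp_all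
    also have "\<dots> = marginal S id n (n + m + k) (A \<union> B) \<Omega>1"
      using xz_index(3) by (rule marginal_cong)
    also have "\<dots> = restr S n (A \<union> B) (marginal S id n (n + m + k) UNIV \<Omega>1)"
      by (simp add: restr_marginal)
    finally show ?thesis
      using \<Omega>1 by (simp add: joint_extension_def)
  qed
  moreover have "pi_y S n k UNIV \<omega> = \<eta>"
    if "keisler S (n + k) UNIV \<omega>" "restr S (n + k) (A \<union> B) \<omega> = \<theta>" "pi_x S n k UNIV \<omega> = \<mu>" for \<omega>
    using xz_extension_z_marginal[OF \<Omega>1 \<theta>1 \<theta>2] that by (simp add: \<theta>_def)
  ultimately show ?thesis
    unfolding geEA_witness_def \<theta>_def by blast
qed

lemma geEA_trans:
  assumes "keisler S n UNIV \<mu>" "geEA S A n m \<mu> \<nu>" "geEA S B m k \<nu> \<eta>"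
  shows "geEA S (A \<union> B) n k \<mu> \<eta>"
proof -
  obtain \<theta>1 \<theta>2 where \<theta>1: "geEA_witness S A n m \<theta>1 \<mu> \<nu>" and \<theta>2: "geEA_witness S B m k \<theta>2 \<nu> \<eta>"
    using assms(2,3) by (auto simp: geEA_iff_witness)
  then obtain \<Omega> where "joint_extension S A B n m k \<mu> \<theta>1 \<theta>2 \<Omega>"
    using joint_extension_exists[OF assms(1)] by blast
  from geEA_witness_xz_marginal[OF this \<theta>1 \<theta>2] show ?thesis
    unfolding geEA_iff_witness by blast
qed

definition diagonal :: "nat \<Rightarrow> 'a list set" where
  "diagonal n = {v @ v | v. length v = n}"

lemma coords_mod_eq_append: "length v = n \<Longrightarrow> coords (\<lambda>i. i mod n) (n + n) v = v @ v"
  by (intro nth_equalityI) (auto simp: nth_append mod_if)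

lemma pullback_mod_diagonal: "pullback (\<lambda>i. i mod n) (n + n) n (diagonal n) = {v. length v = n}"
  by (auto simp: pullback_def diagonal_def coords_mod_eq_append)

lemma Defs_diagonal:
  fixes S :: "('f, 'r, 'u) struc"
  shows "diagonal n \<in> Defs S (n + n) B"
proof -
  have "diagonal n = coords (\<lambda>i. i mod n) (n + n) ` {v :: 'u list. length v = n}"
    by (auto simp: diagonal_def coords_mod_eq_append)
  moreover have "coords (\<lambda>i. i mod n) (n + n) ` {v. length v = n} \<in> Defs S (n + n) B"
    by (rule Defs_image_coords[OF algebra.top[OF algebra_Defs]]) simp
  ultimately show ?thesis
    by simp
qed

lemma pi_y_eq_pi_x_if_diagonal:
  fixes S :: "('f, 'r, 'u) struc"
  assumes "keisler S (n + n) UNIV \<omega>" "\<omega> (diagonal n) = 1"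
  shows "pi_y S n n UNIV \<omega> = pi_x S n n UNIV \<omega>"
proof
  fix Y :: "'u list set"
  interpret fa_probability "{u. length u = n + n}" "Defs S (n + n) UNIV" \<omega>
    using keisler_fa_probability[OF assms(1)] .
  show "pi_y S n n UNIV \<omega> Y = pi_x S n n UNIV \<omega> Y"
  proof (cases "Y \<in> Defs S n UNIV")
    case True
    have "\<omega> (pullback ((+) n) n (n + n) Y) = \<omega> (pullback ((+) n) n (n + n) Y \<inter> diagonal n)"
      using measure_Int_conull[OF Defs_diagonal assms(2) Defs_pullback[OF True]] by simp
    also have "pullback ((+) n) n (n + n) Y \<inter> diagonal n = pullback id n (n + n) Y \<inter> diagonal n"
      by (auto simp: pullback_def diagonal_def coords_add_eq_drop coords_id_eq_take)
    also have "\<omega> \<dots> = \<omega> (pullback id n (n + n) Y)"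
      using measure_Int_conull[OF Defs_diagonal assms(2) Defs_pullback[OF True]] by simp
    finally show ?thesis
      using True by (simp add: pi_x_eq_marginal pi_y_eq_marginal marginal_def)
  qed (simp add: pi_x_eq_marginal pi_y_eq_marginal marginal_def)
qed

lemma geEA_refl:
  assumes \<mu>: "keisler S n UNIV \<mu>"
  shows "geEA S {} n n \<mu> \<mu>"
proof -
  define \<theta> where "\<theta> = marginal S (\<lambda>i. i mod n) (n + n) n {} \<mu>"
  have "keisler S (n + n) {} \<theta>"
    using keisler_marginal[OF \<mu>] by (simp add: \<theta>_def)
  moreover have "pi_x S n n {} \<theta> = restr S n {} \<mu>"
  proof -
    have "pi_x S n n {} \<theta> = marginal S ((\<lambda>i. i mod n) \<circ> id) n n {} \<mu>"
      unfolding \<theta>_def pi_x_eq_marginal by (rule marginal_marginal) simp_all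
    also have "\<dots> = marginal S id n n {} \<mu>"
      by (rule marginal_cong) simp
    finally show ?thesis
      by (simp add: marginal_id)
  qed
  moreover have "pi_y S n n UNIV \<omega> = \<mu>"
    if "keisler S (n + n) UNIV \<omega>" "restr S (n + n) {} \<omega> = \<theta>" "pi_x S n n UNIV \<omega> = \<mu>" for \<omega>
  proof -
    have "\<omega> (diagonal n) = \<theta> (diagonal n)"
      using that(2) Defs_diagonal[of n S "{}"] by (auto simp: restr_def)
    also have "\<dots> = 1"
      using keisler_fa_probability[OF \<mu>] Defs_diagonal[of n S "{}"]
      by (simp add: \<theta>_def marginal_def pullback_mod_diagonal fa_probability.total)
    finally show ?thesis
      using pi_y_eq_pi_x_if_diagonal[OF that(1)] that(3) by simp
  qed
  ultimately show ?thesis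
    unfolding geEA_iff_witness geEA_witness_def by blast
qed

lemma monster_small_empty: "monster S \<kappa> \<Longrightarrow> small \<kappa> {}"
  unfolding monster_def small_def using card_of_empty ordLeq_ordLess_trans by blast

lemma monster_small_Un:
  assumes "monster S \<kappa>" "small \<kappa> A" "small \<kappa> B"
  shows "small \<kappa> (A \<union> B)"
proof -
  have \<kappa>: "Card_order \<kappa>" "ordLess2 (card_of (UNIV :: nat set)) \<kappa>"
    using assms(1) by (auto simp: monster_def)
  then have "\<not> finite (Field \<kappa>)"
    by (metis Field_card_of card_of_mono2 infinite_iff_card_of_nat ordLess_imp_ordLeq)
  then show ?thesis
    using assms(2,3) card_of_Un_ordLess_infinite_Field[OF _ \<kappa>(1)] by (simp add: small_def)
qed

theorem theorem3p13:
  fixes S :: "('f, 'r, 'u) struc" and \<kappa> :: "'k rel"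
  assumes "monster S \<kappa>"
  shows "(\<forall>n \<mu>. keisler S n UNIV \<mu> \<longrightarrow> geE S \<kappa> n n \<mu> \<mu>) \<and>
         (\<forall>n m k \<mu> \<nu> \<eta>. keisler S n UNIV \<mu> \<and> keisler S m UNIV \<nu> \<and> keisler S k UNIV \<eta> \<and>
            geE S \<kappa> n m \<mu> \<nu> \<and> geE S \<kappa> m k \<nu> \<eta> \<longrightarrow> geE S \<kappa> n k \<mu> \<eta>)"
proof (intro conjI allI impI)
  fix n \<mu>
  assume "keisler S n UNIV \<mu>"
  then show "geE S \<kappa> n n \<mu> \<mu>"
    unfolding geE_def using geEA_refl monster_small_empty[OF assms] by blast
next
  fix n m k \<mu> \<nu> \<eta>
  assume "keisler S n UNIV \<mu> \<and> keisler S m UNIV \<nu> \<and> keisler S k UNIV \<eta> \<and>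
    geE S \<kappa> n m \<mu> \<nu> \<and> geE S \<kappa> m k \<nu> \<eta>"
  then obtain A B where "keisler S n UNIV \<mu>" "small \<kappa> A" "geEA S A n m \<mu> \<nu>"
    "small \<kappa> B" "geEA S B m k \<nu> \<eta>"
    unfolding geE_def by blast
  then show "geE S \<kappa> n k \<mu> \<eta>"
    unfolding geE_def using geEA_trans monster_small_Un[OF assms] by blast
qed

end
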